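(* Let $X$ be a real Hilbert space with inner product $\langle\cdot,\cdot\rangle$ and norm $|x|=\sqrt{\langle x,x\rangle}$, let $G:X\to[0,\infty)$ and $Z=\{z\in X:G(z)\le1\}$. Assume that the gradient $\nabla G(x)$ exists for every $x\in X$ and that there are positive constants $\lambda,c$ and a continuous increasing function $\mu:[0,\infty)\to[0,\infty)$ with $\mu(0)=0$, $\lim_{s\to\infty}\mu(s)=\infty$, such that (i) $G(x)=1\Rightarrow|\nabla G(x)|\ge c$ for all $x\in X$; (ii) $|\nabla G(x)-\nabla G(y)|\le\mu(|x-y|)$ for all $x,y\in Z$; (iii) $\langle\nabla G(x)-\nabla G(z),x-z\rangle\ge-\lambda|x-z|^2$ for all $x\in\partial Z$, $z\in Z$. Let $r=c/\lambda$. Then for all $x\in\partial Z$ and $z\in Z$, $$\langle\nabla G(x),x-z\rangle+\frac{|\nabla G(x)|}{2r}|x-z|^2\ge0.$$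
   Context: The gradient $\nabla G(x)\in X$ is defined by $\langle\nabla G(x),y\rangle=\lim_{t\to0}\frac1t(G(x+ty)-G(x))$ for all $y\in X$. $\partial Z$ denotes the boundary of $Z$. *)

theory Defs
  imports "HOL-Analysis.Analysis"
begin

definition is_gradient :: "('a::real_inner \<Rightarrow> real) \<Rightarrow> 'a \<Rightarrow> 'a \<Rightarrow> bool" where
  "is_gradient G x g \<longleftrightarrow>
     (\<forall>y. ((\<lambda>t. (G (x + t *\<^sub>R y) - G x) / t) \<longlongrightarrow> inner g y) (at 0))"

end

(*
  With \<nu> = \<nabla>G x / |\<nabla>G x|, the inequality says that Z misses the open ball of radius r = c / \<lambda>
  centred at x + r \<nu>.  We bound the supremum S of <\<nu>, z - x> / |z - x|^2 over Z by
  \<lambda> / (|\<nabla>G x| + c) \<le> 1 / (2 r).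

  Since G is only Gateaux differentiable and \<nabla>G is only controlled on Z, everything is done
  along segments with a comparison principle that uses slope bounds only inside Z; this already
  shows that Z is closed with G = 1 on its frontier, and, with (iii) and a first-return argument,
  the crude bound S \<le> \<lambda> / |\<nabla>G x|.  Near x the boundary is a graph over the tangent directions
  whose slope grows at most like (\<lambda> / |\<nabla>G x|) s, so integrating gives height at most
  (\<lambda> / (2 |\<nabla>G x|)) s^2.  Hence, if S were larger, near-maximisers w may be taken on the
  frontier at a definite distance from x.  Such a w almost touches the exterior ball of radius
  1 / (2 S), which forces \<nabla>G w to point almost to its centre, and (iii) applied to x and w then
  gives (|\<nabla>G x| + |\<nabla>G w|) S \<le> \<lambda> up to errors that can be made small, while |\<nabla>G w| \<ge> c.
*)
theory Submission
  imports Defs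
begin

section \<open>A comparison principle\<close>

lemma eventually_below_level_at_right:
  fixes \<phi> :: "real \<Rightarrow> real"
  assumes deriv: "(\<phi> has_real_derivative D) (at s)"
    and level: "\<phi> s < l \<or> (\<phi> s \<le> l \<and> D < 0)"
  shows "\<exists>d>0. \<forall>h. 0 < h \<longrightarrow> h < d \<longrightarrow> \<phi> (s + h) < l"
proof (cases "\<phi> s < l")
  case True
  have "isCont \<phi> s" using deriv by (rule DERIV_isCont)
  then obtain d where "d > 0" and d: "\<And>y. dist y s < d \<Longrightarrow> dist (\<phi> y) (\<phi> s) < l - \<phi> s"
    using True unfolding continuous_at_eps_delta by (metis diff_gt_0_iff_gt)
  show ?thesis
  proof (intro exI[of _ d] conjI allI impI)
    fix h :: real assume "0 < h" "h < d"
    then show "\<phi> (s + h) < l" using d[of "s + h"] by (simp add: dist_real_def abs_less_iff)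
  qed (rule \<open>d > 0\<close>)
next
  case False
  with level have "\<phi> s \<le> l" "D < 0" by auto
  then show ?thesis using DERIV_neg_dec_right[OF deriv] by force
qed

text \<open>\<open>\<nabla>G\<close> is only controlled on \<open>Z\<close>, so along a segment a slope bound is available only while
  the segment stays in \<open>Z\<close>; this comparison principle asks for it only there.\<close>
lemma DERIV_affine_bound_below_level:
  fixes \<phi> \<phi>' :: "real \<Rightarrow> real"
  assumes deriv: "\<And>t. (\<phi> has_real_derivative \<phi>' t) (at t)"
    and start: "\<phi> 0 \<le> l"
    and below: "\<And>t. 0 < t \<Longrightarrow> t \<le> T \<Longrightarrow> \<phi> 0 + K * t < l"
    and slope: "\<And>t. 0 \<le> t \<Longrightarrow> t \<le> T \<Longrightarrow> \<phi> t \<le> l \<Longrightarrow> \<phi>' t \<le> K"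
    and t: "0 \<le> t" "t \<le> T"
  shows "\<phi> t \<le> \<phi> 0 + K * t"
proof (rule ccontr)
  assume neg: "\<not> ?thesis"
  define g where "g r = \<phi> r - \<phi> 0 - K * r" for r
  have gt: "g t > 0" using neg by (simp add: g_def)
  have Dg: "(g has_real_derivative (\<phi>' r - K)) (at r)" for r
    unfolding g_def by (auto intro!: derivative_eq_intros deriv)
  have "continuous_on UNIV g"
    using Dg by (meson DERIV_isCont continuous_at_imp_continuous_on)
  then have "closed ({0..t} \<inter> {r. g r \<le> 0})"
    by (intro closed_Int closed_atLeastAtMost closed_Collect_le) auto
  moreover have "0 \<in> {0..t} \<inter> {r. g r \<le> 0}" using t by (simp add: g_def)
  moreover have "bdd_above ({0..t} \<inter> {r. g r \<le> 0})" by (auto intro: bdd_aboveI[of _ t])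
  ultimately obtain s where s: "s \<in> {0..t} \<inter> {r. g r \<le> 0}"
    and last: "\<And>r. r \<in> {0..t} \<inter> {r. g r \<le> 0} \<Longrightarrow> r \<le> s"
    using closed_contains_Sup cSup_upper by (metis empty_iff)
  have "s < t" using s gt by (cases "s = t") auto
  have \<phi>s: "\<phi> s \<le> \<phi> 0 + K * s" using s by (simp add: g_def)
  have "\<phi> s < l \<or> (\<phi> s \<le> l \<and> \<phi>' s < 0)"
  proof (cases "s = 0")
    case True
    show ?thesis
    proof (cases "\<phi> 0 < l")
      case False
      \<comment> \<open>then \<open>\<phi>\<close> starts exactly at the level, which forces \<open>K < 0\<close>\<close>
      with start have "\<phi> 0 = l" by simp
      with below[of t] \<open>s < t\<close> True t have "K < 0" by (smt (verit) mult_nonneg_nonneg)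
      with slope[of 0] \<open>\<phi> 0 = l\<close> t show ?thesis using True by simp
    qed (use True in simp)
  next
    case False
    then show ?thesis using below[of s] \<phi>s s t by simp
  qed
  then obtain d where "d > 0" and d: "\<And>h. 0 < h \<Longrightarrow> h < d \<Longrightarrow> \<phi> (s + h) < l"
    using eventually_below_level_at_right[OF deriv] by blast
  define t2 where "t2 = min (s + d/2) t"
  have t2: "s < t2" "t2 \<le> t" using \<open>d > 0\<close> \<open>s < t\<close> by (auto simp: t2_def)
  obtain z where z: "s < z" "z < t2" "g t2 - g s = (t2 - s) * (\<phi>' z - K)"
    using MVT2[OF t2(1), of g "\<lambda>r. \<phi>' r - K"] Dg by blast
  have "\<phi> z < l" using d[of "z - s"] z t2 \<open>d > 0\<close> by (auto simp: t2_def)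
  then have "\<phi>' z \<le> K" using slope[of z] z t2 s t by auto
  then have "g t2 \<le> g s" using z by (smt (verit) mult_nonneg_nonpos)
  then have "t2 \<le> s" using last[of t2] s t2 by auto
  then show False using t2 by simp
qed

section \<open>Inner-product estimates\<close>

lemma inner_le_of_norm_diff_le:
  fixes x y u :: "'a::real_inner"
  assumes "norm (y - x) \<le> m"
  shows "inner y u \<le> inner x u + m * norm u"
proof -
  have "inner (y - x) u \<le> norm (y - x) * norm u" by (rule norm_cauchy_schwarz)
  also have "\<dots> \<le> m * norm u" using assms by (rule mult_right_mono) simp
  finally show ?thesis by (simp add: inner_diff_left)
qed

lemma eq_norm_scaleR_sgn:
  fixes g :: "'a::real_normed_vector"
  shows "g = norm g *\<^sub>R sgn g"
  by (cases "g = 0") (simp_all add: sgn_div_norm)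

lemma inner_sgn_self:
  fixes g :: "'a::real_inner"
  shows "inner g (sgn g) = norm g"
  by (cases "g = 0") (simp_all add: sgn_div_norm power2_norm_eq_inner[symmetric] power2_eq_square)

lemma power2_norm_diff_scaleR:
  fixes v n :: "'a::real_inner"
  assumes "norm n = 1"
  shows "(norm (v - r *\<^sub>R n))\<^sup>2 = (norm v)\<^sup>2 - 2 * r * inner n v + r\<^sup>2"
  using dot_norm_neg[of v "r *\<^sub>R n"] assms by (simp add: inner_commute power_mult_distrib)

lemma power2_norm_add_scaleR:
  fixes e u :: "'a::real_inner"
  assumes "norm e = 1" "norm u = 1"
  shows "(norm (R *\<^sub>R e + t *\<^sub>R u))\<^sup>2 = R\<^sup>2 + 2 * R * t * inner e u + t\<^sup>2"
  using power2_norm_diff_scaleR[of u "R *\<^sub>R e" "- t"] assms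
  by (simp add: power_mult_distrib inner_commute algebra_simps)

lemma inner_sgn_add_unit:
  fixes e n :: "'a::real_inner"
  assumes e: "norm e = 1" and n: "norm n = 1"
  shows "inner e (sgn (e + n)) = norm (e + n) / 2" "inner n (sgn (e + n)) = norm (e + n) / 2"
proof -
  have "(norm (e + n))\<^sup>2 = 2 + 2 * inner e n"
    using power2_norm_add_scaleR[OF e n, of 1 1] by simp
  moreover have "inner e e = 1" "inner n n = 1"
    using e n by (metis power2_norm_eq_inner one_power2)+
  ultimately have "inner e (e + n) = (norm (e + n))\<^sup>2 / 2" "inner n (e + n) = (norm (e + n))\<^sup>2 / 2"
    by (simp_all add: inner_add_right inner_commute)
  moreover have "inner y (sgn (e + n)) = inner y (e + n) / norm (e + n)" for y :: 'a
    by (simp add: sgn_div_norm divide_inverse mult.commute)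
  ultimately show "inner e (sgn (e + n)) = norm (e + n) / 2" "inner n (sgn (e + n)) = norm (e + n) / 2"
    by (simp_all add: power2_eq_square)
qed

lemma radius_le_norm_diff_of_inner_le:
  fixes n v :: "'a::real_inner"
  assumes n: "norm n = 1" and S: "0 < S" and le: "inner n v \<le> S * (norm v)\<^sup>2"
  shows "1 / (2 * S) \<le> norm (v - (1 / (2 * S)) *\<^sub>R n)"
proof -
  have "2 * (1 / (2 * S)) * inner n v \<le> 2 * (1 / (2 * S)) * (S * (norm v)\<^sup>2)"
    using le S by (intro mult_left_mono) auto
  then have "(1 / (2 * S))\<^sup>2 \<le> (norm (v - (1 / (2 * S)) *\<^sub>R n))\<^sup>2"
    using power2_norm_diff_scaleR[OF n, of v "1 / (2 * S)"] S by simp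
  then show ?thesis by (rule power2_le_imp_le) simp
qed

lemma inner_ge_of_near_sphere_normal:
  fixes n \<nu> v :: "'a::real_inner"
  assumes \<nu>: "norm \<nu> = 1" and S: "0 < S" and le: "inner \<nu> v \<le> S * (norm v)\<^sup>2"
    and near: "norm (n + (2 * S) *\<^sub>R (v - (1 / (2 * S)) *\<^sub>R \<nu>)) \<le> k"
  shows "S * (norm v)\<^sup>2 - k * norm v \<le> inner n (- v)"
proof -
  define u where "u = n + (2 * S) *\<^sub>R (v - (1 / (2 * S)) *\<^sub>R \<nu>)"
  have "n = u - (2 * S) *\<^sub>R v + \<nu>" using S by (simp add: u_def algebra_simps)
  then have "inner n (- v) = - inner u v + 2 * S * (norm v)\<^sup>2 - inner \<nu> v"
    by (simp add: inner_diff_left inner_add_left power2_norm_eq_inner)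
  moreover have "inner u v \<le> k * norm v"
    using norm_cauchy_schwarz[of u v] near mult_right_mono[of "norm u" k "norm v"] by (simp add: u_def)
  ultimately show ?thesis using le by linarith
qed

lemma power2_norm_diff_radius_less:
  fixes \<nu> v :: "'a::real_inner"
  assumes \<nu>: "norm \<nu> = 1" and S: "0 < S" and \<epsilon>: "0 \<le> \<epsilon>" "2 * \<epsilon> \<le> S"
    and lower: "(S - \<epsilon>) * (norm v)\<^sup>2 < inner \<nu> v"
  shows "(norm (v - (1 / (2 * S)) *\<^sub>R \<nu>))\<^sup>2 < (1 / (2 * S))\<^sup>2 + 4 * \<epsilon> / S ^ 3"
proof -
  define D where "D = norm v"
  have "inner \<nu> v \<le> D" using norm_cauchy_schwarz[of \<nu> v] \<nu> by (simp add: D_def)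
  moreover have "S / 2 * D\<^sup>2 \<le> (S - \<epsilon>) * D\<^sup>2" using \<epsilon> by (intro mult_right_mono) auto
  ultimately have "S / 2 * D * D < D" using lower by (simp add: D_def power2_eq_square mult.assoc)
  moreover have "0 < D" using calculation by (cases "D = 0") (auto simp: D_def)
  ultimately have "S / 2 * D * D < 1 * D" by simp
  then have "S / 2 * D < 1" using \<open>0 < D\<close> by (simp only: mult_less_cancel_right_pos)
  then have D: "0 < D" "D \<le> 2 / S" using S \<open>0 < D\<close> by (simp_all add: field_simps)
  have "(norm (v - (1 / (2 * S)) *\<^sub>R \<nu>))\<^sup>2 = (1 / (2 * S))\<^sup>2 + (S * D\<^sup>2 - inner \<nu> v) / S"
    using power2_norm_diff_scaleR[OF \<nu>, of v "1 / (2 * S)"] S by (simp add: D_def field_simps)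
  also have "(S * D\<^sup>2 - inner \<nu> v) / S < \<epsilon> * D\<^sup>2 / S"
    using lower S by (intro divide_strict_right_mono) (simp_all add: D_def algebra_simps)
  also have "\<epsilon> * D\<^sup>2 / S \<le> \<epsilon> * (2 / S)\<^sup>2 / S"
    using \<epsilon> D S by (intro divide_right_mono mult_left_mono power_mono) auto
  also have "\<dots> = 4 * \<epsilon> / S ^ 3" by (simp add: power2_eq_square power3_eq_cube)
  finally show ?thesis by simp
qed

section \<open>The sublevel set and its frontier\<close>

locale regular_sublevel =
  fixes G :: "'a::real_inner \<Rightarrow> real"
    and gradG :: "'a \<Rightarrow> 'a"
    and mu :: "real \<Rightarrow> real"
    and lam c :: real
  assumes gradient: "\<And>x. is_gradient G x (gradG x)"
    and lam_pos: "0 < lam" and c_pos: "0 < c"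
    and mu_cont: "continuous_on {0..} mu"
    and mu_mono: "mono_on {0..} mu"
    and mu_0: "mu 0 = 0"
    and gradG_level: "\<And>x. G x = 1 \<Longrightarrow> c \<le> norm (gradG x)"
    and gradG_modulus: "\<And>x y. G x \<le> 1 \<Longrightarrow> G y \<le> 1 \<Longrightarrow>
          norm (gradG x - gradG y) \<le> mu (norm (x - y))"
    and gradG_semimonotone: "\<And>x z. x \<in> frontier {z. G z \<le> 1} \<Longrightarrow> G z \<le> 1 \<Longrightarrow>
          - lam * (norm (x - z))\<^sup>2 \<le> inner (gradG x - gradG z) (x - z)"
begin

abbreviation "Z \<equiv> {z. G z \<le> 1}"

lemma G_line_deriv:
  "((\<lambda>s. G (p + s *\<^sub>R v)) has_real_derivative inner (gradG (p + t *\<^sub>R v)) v) (at t)"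
proof -
  have "((\<lambda>h. (G (p + t *\<^sub>R v + h *\<^sub>R v) - G (p + t *\<^sub>R v)) / h)
          \<longlongrightarrow> inner (gradG (p + t *\<^sub>R v)) v) (at 0)"
    using gradient[of "p + t *\<^sub>R v"] unfolding is_gradient_def by blast
  moreover have "p + (t + h) *\<^sub>R v = p + t *\<^sub>R v + h *\<^sub>R v" for h
    by (simp add: scaleR_add_left algebra_simps)
  ultimately show ?thesis unfolding DERIV_def by (simp add: add.assoc)
qed

lemma isCont_G_line: "isCont (\<lambda>s. G (p + s *\<^sub>R v)) t"
  using G_line_deriv by (rule DERIV_isCont)

lemma mu_le_mu: "0 \<le> r \<Longrightarrow> r \<le> s \<Longrightarrow> mu r \<le> mu s"
  using mu_mono by (auto intro: mono_onD)

lemma mu_nonneg: "0 \<le> s \<Longrightarrow> 0 \<le> mu s"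
  using mu_le_mu[of 0 s] mu_0 by simp

lemma mu_small_near_0:
  assumes "0 < e"
  shows "\<exists>d>0. \<forall>s. 0 \<le> s \<longrightarrow> s \<le> d \<longrightarrow> mu s \<le> e"
proof -
  have "continuous (at 0 within {0..}) mu"
    using mu_cont by (simp add: continuous_on_eq_continuous_within)
  then obtain d where "d > 0" and d: "\<And>s. s \<in> {0..} \<Longrightarrow> dist s 0 < d \<Longrightarrow> dist (mu s) (mu 0) < e"
    using assms unfolding continuous_within_eps_delta by blast
  show ?thesis
  proof (intro exI[of _ "d/2"] conjI allI impI)
    fix s assume "0 \<le> s" "s \<le> d/2"
    then show "mu s \<le> e" using d[of s] \<open>d > 0\<close> mu_0 by (simp add: dist_real_def)
  qed (use \<open>d > 0\<close> in simp)
qed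

lemma norm_gradG_le: "G p \<le> 1 \<Longrightarrow> G q \<le> 1 \<Longrightarrow> norm (gradG p) \<le> norm (gradG q) + mu (norm (p - q))"
  using gradG_modulus[of p q] norm_triangle_ineq2[of "gradG p" "gradG q"] by simp

lemma G_segment_bound:
  assumes "G p \<le> 1" and "\<And>t. 0 < t \<Longrightarrow> t \<le> 1 \<Longrightarrow> G p + K * t < 1"
    and "\<And>t. 0 \<le> t \<Longrightarrow> t \<le> 1 \<Longrightarrow> G (p + t *\<^sub>R v) \<le> 1 \<Longrightarrow> inner (gradG (p + t *\<^sub>R v)) v \<le> K"
  shows "G (p + v) \<le> G p + K"
  using DERIV_affine_bound_below_level[where \<phi> = "\<lambda>s. G (p + s *\<^sub>R v)" and l = 1 and T = 1 and t = 1,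
      OF G_line_deriv] assms by simp

lemma G_segment_descent:
  assumes "G p \<le> 1" and "0 < k"
    and "\<And>t. 0 \<le> t \<Longrightarrow> t \<le> 1 \<Longrightarrow> G (p + t *\<^sub>R v) \<le> 1 \<Longrightarrow> inner (gradG (p + t *\<^sub>R v)) v \<le> - k"
  shows "G (p + v) \<le> G p - k"
proof -
  have "G p - k * t < 1" if "0 < t" for t
    using assms(1,2) mult_pos_pos[OF assms(2) that] by linarith
  then show ?thesis using G_segment_bound[of p "- k" v] assms by simp
qed

lemma G_segment_lipschitz:
  assumes "G p + M * norm v < 1" and "0 \<le> M"
    and "\<And>t. 0 \<le> t \<Longrightarrow> t \<le> 1 \<Longrightarrow> G (p + t *\<^sub>R v) \<le> 1 \<Longrightarrow> norm (gradG (p + t *\<^sub>R v)) \<le> M"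
  shows "G (p + v) \<le> G p + M * norm v"
proof (rule G_segment_bound)
  show "G p \<le> 1" using assms(1,2) by (smt (verit) mult_nonneg_nonneg norm_ge_zero)
  show "G p + M * norm v * t < 1" if "0 < t" "t \<le> 1" for t
    using assms(1,2) that by (smt (verit) mult_left_le mult_nonneg_nonneg norm_ge_zero)
  show "inner (gradG (p + t *\<^sub>R v)) v \<le> M * norm v"
    if "0 \<le> t" "t \<le> 1" "G (p + t *\<^sub>R v) \<le> 1" for t
    using norm_cauchy_schwarz[of "gradG (p + t *\<^sub>R v)" v] assms(3)[OF that]
    by (smt (verit) mult_right_mono norm_ge_zero)
qed

lemma interior_sublevel:
  assumes "G x < 1"
  shows "x \<in> interior Z"
proof -
  define M where "M = norm (gradG x) + mu 1"
  have M: "0 \<le> M" using mu_nonneg[of 1] by (simp add: M_def)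
  define d where "d = min 1 ((1 - G x) / (M + 1))"
  have "0 < d" using assms M by (simp add: d_def)
  have "y \<in> Z" if "y \<in> ball x d" for y
  proof -
    have yx: "norm (y - x) < d" using that by (simp add: dist_norm norm_minus_commute)
    have "M * norm (y - x) \<le> M * ((1 - G x) / (M + 1))"
      using yx M by (intro mult_left_mono) (auto simp: d_def)
    also have "\<dots> < 1 - G x" using assms M by (simp add: field_simps)
    finally have small: "G x + M * norm (y - x) < 1" by simp
    have "G (x + (y - x)) \<le> G x + M * norm (y - x)"
    proof (rule G_segment_lipschitz[OF small M])
      fix t :: real assume t: "0 \<le> t" "t \<le> 1" and "G (x + t *\<^sub>R (y - x)) \<le> 1"
      then have "norm (gradG (x + t *\<^sub>R (y - x))) \<le> norm (gradG x) + mu (t * norm (y - x))"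
        using norm_gradG_le[of "x + t *\<^sub>R (y - x)" x] assms by simp
      also have "mu (t * norm (y - x)) \<le> mu 1"
        using t yx by (intro mu_le_mu) (auto simp: d_def intro: mult_le_one)
      finally show "norm (gradG (x + t *\<^sub>R (y - x))) \<le> M" by (simp add: M_def)
    qed
    with small show ?thesis by simp
  qed
  then show ?thesis using \<open>0 < d\<close> mem_interior by blast
qed

lemma level_point_near:
  assumes x: "x \<in> closure Z" and gx: "1 < G x" and e: "0 < e"
  shows "\<exists>w. G w = 1 \<and> norm (w - x) < e"
proof -
  obtain z where z: "z \<in> Z" "dist z x < e" using x e unfolding closure_approachable by blast
  obtain t where t: "0 \<le> t" "t \<le> 1" "G (z + t *\<^sub>R (x - z)) = 1"
    using IVT[of "\<lambda>t. G (z + t *\<^sub>R (x - z))" 0 1 1] z gx isCont_G_line by auto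
  have "z + t *\<^sub>R (x - z) - x = (1 - t) *\<^sub>R (z - x)" by (simp add: algebra_simps)
  then have "norm (z + t *\<^sub>R (x - z) - x) = (1 - t) * norm (z - x)" using t by simp
  also have "\<dots> \<le> norm (z - x)" using t by (simp add: mult_left_le_one_le)
  also have "\<dots> < e" using z by (simp add: dist_norm)
  finally show ?thesis using t by blast
qed

text \<open>Moving from near \<open>x\<close> along the descent direction of a nearby level point keeps
  \<open>G\<close> below \<open>1\<close>, with a margin that absorbs the return to the ray through \<open>x\<close>.\<close>
lemma descent_ray_in_sublevel:
  assumes x: "x \<in> closure Z" and w1: "G w1 = 1" and near: "norm (x - w1) < \<eta>"
    and mu_\<eta>: "\<And>s. 0 \<le> s \<Longrightarrow> s \<le> 3 * \<eta> \<Longrightarrow> mu s \<le> c / 2"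
    and t: "0 < t" "t \<le> \<eta>"
  shows "G (x + t *\<^sub>R (- sgn (gradG w1))) \<le> 1"
proof -
  define g1 where "g1 = gradG w1"
  define u where "u = - sgn g1"
  have g1: "c \<le> norm g1" using gradG_level[OF w1] by (simp add: g1_def)
  then have "g1 \<noteq> 0" using c_pos by auto
  then have u: "norm u = 1" "inner g1 u = - norm g1"
    using inner_sgn_self[of g1] by (simp_all add: u_def norm_sgn)
  have close: "norm (gradG p - g1) \<le> c / 2" if "G p \<le> 1" "norm (p - w1) \<le> 3 * \<eta>" for p
    using gradG_modulus[of p w1] w1 that mu_\<eta>[of "norm (p - w1)"] by (simp add: g1_def)
  define M where "M = norm g1 + c / 2"
  have M: "0 < M" using g1 c_pos by (simp add: M_def)
  define d1 where "d1 = min \<eta> (t * c / (4 * M))"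
  have "0 < d1" using t near M c_pos by (simp add: d1_def)
  then obtain w where w: "G w \<le> 1" "dist w x < d1" using x unfolding closure_approachable by blast
  have wx: "norm (x - w) \<le> \<eta>" "M * norm (x - w) \<le> t * c / 4"
    using w M by (auto simp: d1_def dist_norm norm_minus_commute field_simps)
  have descent: "G (w + t *\<^sub>R u) \<le> G w - t * c / 2"
  proof (rule G_segment_descent[OF w(1)])
    show "0 < t * c / 2" using t c_pos by simp
    fix s :: real assume s: "0 \<le> s" "s \<le> 1" and in_Z: "G (w + s *\<^sub>R t *\<^sub>R u) \<le> 1"
    have "w + s *\<^sub>R t *\<^sub>R u - w1 = s *\<^sub>R t *\<^sub>R u + (w - x) + (x - w1)" by simp
    then have "norm (w + s *\<^sub>R t *\<^sub>R u - w1) \<le> norm (s *\<^sub>R t *\<^sub>R u) + norm (w - x) + norm (x - w1)"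
      by (metis norm_triangle_le norm_triangle_ineq add_mono order_refl)
    also have "\<dots> \<le> 3 * \<eta>"
    proof -
      have "s * t \<le> t" using s t by (simp add: mult_left_le_one_le)
      moreover have "norm (s *\<^sub>R t *\<^sub>R u) = s * t" using s t u by simp
      ultimately show ?thesis using t wx(1) near norm_minus_commute[of x w] by linarith
    qed
    finally have "norm (gradG (w + s *\<^sub>R t *\<^sub>R u) - g1) \<le> c / 2" using close in_Z by simp
    then have "inner (gradG (w + s *\<^sub>R t *\<^sub>R u)) u \<le> - norm g1 + c / 2"
      using inner_le_of_norm_diff_le[of "gradG (w + s *\<^sub>R t *\<^sub>R u)" g1 "c / 2" u] u by simp
    then have "t * inner (gradG (w + s *\<^sub>R t *\<^sub>R u)) u \<le> t * (- c / 2)"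
      using g1 t by (intro mult_left_mono) auto
    then show "inner (gradG (w + s *\<^sub>R t *\<^sub>R u)) (t *\<^sub>R u) \<le> - (t * c / 2)" by simp
  qed
  have "G (w + t *\<^sub>R u + (x - w)) \<le> G (w + t *\<^sub>R u) + M * norm (x - w)"
  proof (rule G_segment_lipschitz)
    show "G (w + t *\<^sub>R u) + M * norm (x - w) < 1"
      using descent wx w mult_pos_pos[OF t(1) c_pos] by linarith
    show "0 \<le> M" using M by simp
    fix s :: real assume s: "0 \<le> s" "s \<le> 1" and in_Z: "G (w + t *\<^sub>R u + s *\<^sub>R (x - w)) \<le> 1"
    have "w + t *\<^sub>R u + s *\<^sub>R (x - w) - w1 = t *\<^sub>R u + (1 - s) *\<^sub>R (w - x) + (x - w1)"
      by (simp add: algebra_simps)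
    then have "norm (w + t *\<^sub>R u + s *\<^sub>R (x - w) - w1)
        \<le> norm (t *\<^sub>R u) + norm ((1 - s) *\<^sub>R (w - x)) + norm (x - w1)"
      by (metis norm_triangle_le norm_triangle_ineq add_mono order_refl)
    also have "\<dots> \<le> 3 * \<eta>"
    proof -
      have "(1 - s) * norm (w - x) \<le> norm (w - x)" using s by (simp add: mult_left_le_one_le)
      then show ?thesis using s t u wx(1) near by (simp add: norm_minus_commute)
    qed
    finally have "norm (gradG (w + t *\<^sub>R u + s *\<^sub>R (x - w)) - g1) \<le> c / 2" using close in_Z by simp
    then show "norm (gradG (w + t *\<^sub>R u + s *\<^sub>R (x - w))) \<le> M"
      using norm_triangle_ineq2[of "gradG (w + t *\<^sub>R u + s *\<^sub>R (x - w))" g1] by (simp add: M_def)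
  qed
  then have "G (x + t *\<^sub>R u) \<le> G (w + t *\<^sub>R u) + M * norm (x - w)" by (simp add: add.commute)
  then show ?thesis using descent wx w(1) mult_pos_pos[OF t(1) c_pos] by (simp add: u_def g1_def)
qed

lemma closed_sublevel: "closed Z"
proof -
  have "x \<in> Z" if x: "x \<in> closure Z" for x
  proof (rule ccontr)
    assume "x \<notin> Z"
    then have gx: "1 < G x" by simp
    obtain d where "0 < d" and d: "\<And>s. 0 \<le> s \<Longrightarrow> s \<le> d \<Longrightarrow> mu s \<le> c / 2"
      using mu_small_near_0[of "c / 2"] c_pos by auto
    define \<eta> where "\<eta> = d / 3"
    have "0 < \<eta>" using \<open>0 < d\<close> by (simp add: \<eta>_def)
    obtain w1 where w1: "G w1 = 1" "norm (w1 - x) < \<eta>" using level_point_near[OF x gx \<open>0 < \<eta>\<close>] by blast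
    define u where "u = - sgn (gradG w1)"
    have ray: "G (x + t *\<^sub>R u) \<le> 1" if "0 < t" "t \<le> \<eta>" for t
      unfolding u_def using descent_ray_in_sublevel[OF x w1(1) _ _ that] d w1(2)
      by (simp add: \<eta>_def norm_minus_commute)
    obtain \<delta> where "0 < \<delta>" and \<delta>: "\<And>s. dist s 0 < \<delta> \<Longrightarrow> dist (G (x + s *\<^sub>R u)) (G (x + 0 *\<^sub>R u)) < G x - 1"
      using isCont_G_line[where p = x and v = u and t = 0] gx unfolding continuous_at_eps_delta by (metis diff_gt_0_iff_gt)
    define t where "t = min \<eta> (\<delta> / 2)"
    have "0 < t" "t \<le> \<eta>" "dist t 0 < \<delta>" using \<open>0 < \<eta>\<close> \<open>0 < \<delta>\<close> by (auto simp: t_def)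
    then show False using \<delta>[of t] ray[of t] by (simp add: dist_real_def)
  qed
  then show ?thesis using closure_subset_eq by blast
qed

lemma G_frontier: "x \<in> frontier Z \<Longrightarrow> G x = 1"
  using closed_sublevel interior_sublevel by (force simp: frontier_def)

lemma norm_gradG_frontier: "x \<in> frontier Z \<Longrightarrow> c \<le> norm (gradG x)"
  using G_frontier gradG_level by blast

lemma first_return_to_sublevel:
  assumes y: "y \<in> frontier Z" and z: "G z \<le> 1" and pos: "0 < inner (gradG y) (z - y)"
  shows "\<exists>s. 0 < s \<and> s \<le> 1 \<and> y + s *\<^sub>R (z - y) \<in> frontier Z
           \<and> inner (gradG (y + s *\<^sub>R (z - y))) (z - y) \<le> 0"
proof -
  define v where "v = z - y"
  define \<psi> where "\<psi> t = G (y + t *\<^sub>R v)" for t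
  have D\<psi>: "(\<psi> has_real_derivative inner (gradG (y + t *\<^sub>R v)) v) (at t)" for t
    unfolding \<psi>_def by (rule G_line_deriv)
  have "\<psi> 0 = 1" using G_frontier[OF y] by (simp add: \<psi>_def)
  obtain d where "0 < d" and d: "\<And>h. 0 < h \<Longrightarrow> h < d \<Longrightarrow> 1 < \<psi> h"
    using DERIV_pos_inc_right[OF D\<psi>, of 0] pos \<open>\<psi> 0 = 1\<close> unfolding v_def by auto
  define d0 where "d0 = min (d / 2) 1"
  have d0: "0 < d0" "d0 < d" "d0 \<le> 1" using \<open>0 < d\<close> by (auto simp: d0_def)
  define A where "A = {d0..1} \<inter> {t. \<psi> t \<le> 1}"
  have "continuous_on UNIV \<psi>"
    unfolding \<psi>_def using isCont_G_line by (simp add: continuous_at_imp_continuous_on)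
  then have "closed A" unfolding A_def by (intro closed_Int closed_Collect_le) auto
  moreover have "1 \<in> A" using z d0 by (simp add: A_def \<psi>_def v_def)
  moreover have "bdd_below A" unfolding A_def by (auto intro: bdd_belowI[of _ d0])
  ultimately have sA: "Inf A \<in> A" and first: "\<And>t. t \<in> A \<Longrightarrow> Inf A \<le> t"
    using closed_contains_Inf[of A] cInf_lower[of _ A] by auto
  define s where "s = Inf A"
  have s: "d0 \<le> s" "s \<le> 1" "\<psi> s \<le> 1" using sA by (auto simp: A_def s_def)
  have above: "1 < \<psi> t" if "0 < t" "t < s" for t
  proof (cases "t < d")
    case False
    have "t \<notin> A" using first[of t] that by (auto simp: s_def)
    then show ?thesis using False d0 that s unfolding A_def by auto
  qed (use d that in auto)
  have "inner (gradG (y + s *\<^sub>R v)) v \<le> 0"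
  proof (rule ccontr)
    assume "\<not> ?thesis"
    then have "0 < inner (gradG (y + s *\<^sub>R v)) v" by simp
    then obtain d' where "0 < d'" and d': "\<And>h. 0 < h \<Longrightarrow> h < d' \<Longrightarrow> \<psi> (s - h) < \<psi> s"
      using DERIV_pos_inc_left[OF D\<psi>] by blast
    define h where "h = min (d' / 2) (s / 2)"
    have "0 < h" "h < d'" "0 < s - h" "s - h < s" using \<open>0 < d'\<close> s d0 by (auto simp: h_def)
    then show False using d'[of h] above[of "s - h"] s(3) by linarith
  qed
  moreover have "y + s *\<^sub>R v \<in> frontier Z"
    unfolding frontier_straddle
  proof (intro allI impI conjI)
    fix e :: real assume e: "0 < e"
    show "\<exists>x\<in>Z. dist (y + s *\<^sub>R v) x < e" using s e by (intro bexI[of _ "y + s *\<^sub>R v"]) (auto simp: \<psi>_def)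
    have "v \<noteq> 0" using pos by (auto simp: v_def)
    define t where "t = s - min (s / 2) (e / (2 * norm v))"
    have t: "0 < t" "t < s" using s d0 e \<open>v \<noteq> 0\<close> by (auto simp: t_def)
    have "dist (y + s *\<^sub>R v) (y + t *\<^sub>R v) = (s - t) * norm v"
      using t by (simp add: dist_norm flip: scaleR_diff_left)
    also have "\<dots> \<le> e / (2 * norm v) * norm v" by (intro mult_right_mono) (auto simp: t_def)
    also have "\<dots> < e" using e \<open>v \<noteq> 0\<close> by simp
    finally have "dist (y + s *\<^sub>R v) (y + t *\<^sub>R v) < e" .
    moreover have "y + t *\<^sub>R v \<notin> Z" using above[OF t] by (simp add: \<psi>_def)
    ultimately show "\<exists>x. x \<notin> Z \<and> dist (y + s *\<^sub>R v) x < e" by blast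
  qed
  ultimately show ?thesis using s d0 by (intro exI[of _ s]) (auto simp: v_def)
qed

text \<open>A crude exterior-ball property (radius \<open>|\<nabla>G y| / (2\<lambda>)\<close>): the point where a chord from
  \<open>y\<close> re-enters \<open>Z\<close> has gradient pointing back along the chord, and (iii) compares the two ends.\<close>
lemma frontier_inner_gradG_le:
  assumes y: "y \<in> frontier Z" and z: "G z \<le> 1"
  shows "inner (gradG y) (z - y) \<le> lam * (norm (z - y))\<^sup>2"
proof (cases "0 < inner (gradG y) (z - y)")
  case False
  then show ?thesis using lam_pos by (smt (verit) mult_nonneg_nonneg zero_le_power2)
next
  case True
  then obtain s where s: "0 < s" "s \<le> 1" and w_frontier: "y + s *\<^sub>R (z - y) \<in> frontier Z"
    and w_grad: "inner (gradG (y + s *\<^sub>R (z - y))) (z - y) \<le> 0"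
    using first_return_to_sublevel[OF y z] by blast
  define v where "v = z - y"
  define w where "w = y + s *\<^sub>R v"
  have "- lam * (norm (y - w))\<^sup>2 \<le> inner (gradG y - gradG w) (y - w)"
    using gradG_semimonotone[OF y, of w] G_frontier[OF w_frontier] by (simp add: w_def v_def)
  moreover have "y - w = - s *\<^sub>R v" by (simp add: w_def)
  ultimately have "s * (inner (gradG y) v - inner (gradG w) v) \<le> s * (lam * s * (norm v)\<^sup>2)"
    by (simp add: inner_diff_left power_mult_distrib power2_eq_square algebra_simps)
  then have "inner (gradG y) v - inner (gradG w) v \<le> lam * s * (norm v)\<^sup>2" using s by simp
  moreover have "inner (gradG w) v \<le> 0" using w_grad by (simp add: w_def v_def)
  moreover have "lam * s * (norm v)\<^sup>2 \<le> lam * (norm v)\<^sup>2"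
    using s lam_pos mult_left_le_one_le[of "(norm v)\<^sup>2" s] by (simp add: mult.assoc)
  ultimately show ?thesis by (simp add: v_def)
qed

end

section \<open>The boundary as a graph near a frontier point\<close>

lemma le_of_forall_le_plus_divide_nat:
  fixes x y C :: real
  assumes "\<And>N. 0 < N \<Longrightarrow> x \<le> y + C / real N"
  shows "x \<le> y"
proof (rule field_le_epsilon)
  fix e :: real assume "0 < e"
  then obtain N where "0 < N" and N: "inverse (real N) < e / (\<bar>C\<bar> + 1)"
    using ex_inverse_of_nat_less[of "e / (\<bar>C\<bar> + 1)"] by auto
  have "C / real N \<le> (\<bar>C\<bar> + 1) * inverse (real N)"
    using \<open>0 < N\<close> by (simp add: divide_inverse mult_right_mono)
  also have "\<dots> < e" using N by (simp add: field_simps)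
  finally show "x \<le> y + e" using assms[OF \<open>0 < N\<close>] by linarith
qed

text \<open>Discrete analogue of integrating a slope that grows linearly wherever \<open>F\<close> is nonnegative.\<close>
lemma discrete_quadratic_growth:
  fixes F :: "nat \<Rightarrow> real"
  assumes "F 0 = 0" and "0 \<le> C" "0 \<le> E1" "0 \<le> E2"
    and neg: "\<And>i. i < N \<Longrightarrow> F i < 0 \<Longrightarrow> F (Suc i) \<le> F i + E1"
    and nonneg: "\<And>i. i < N \<Longrightarrow> 0 \<le> F i \<Longrightarrow> F (Suc i) \<le> F i + C * real i + E2"
  shows "F N \<le> C * (real N)\<^sup>2 / 2 + real N * E2 + E1"
proof -
  have "F n \<le> C * (real n)\<^sup>2 / 2 + real n * E2 + E1" if "n \<le> N" for n
    using that
  proof (induction n)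
    case 0
    then show ?case using assms(1,3) by simp
  next
    case (Suc i)
    have grow: "C * (real i)\<^sup>2 / 2 + C * real i \<le> C * (real (Suc i))\<^sup>2 / 2"
      using \<open>0 \<le> C\<close> by (simp add: power2_eq_square algebra_simps)
    show ?case
    proof (cases "F i < 0")
      case True
      have "0 \<le> C * (real (Suc i))\<^sup>2 / 2 + real (Suc i) * E2" using assms(2,4) by simp
      then show ?thesis using neg[of i] True Suc.prems by linarith
    next
      case False
      then show ?thesis using nonneg[of i] Suc grow by (simp add: algebra_simps)
    qed
  qed
  then show ?thesis by simp
qed

lemma quadratic_increment_bound:
  fixes d l \<gamma> \<beta> b lam \<delta> :: real
  assumes "0 < b" "0 \<le> lam" "0 \<le> l" "b + 2 * lam * \<delta> \<le> \<beta>" "d \<le> 2 * \<delta>"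
    and ineq: "l * \<gamma> + d * \<beta> \<le> lam * (l\<^sup>2 + d\<^sup>2)"
  shows "d \<le> (l * max 0 (- \<gamma>) + lam * l\<^sup>2) / b"
proof (cases "d \<le> 0")
  case True
  have "0 \<le> (l * max 0 (- \<gamma>) + lam * l\<^sup>2) / b" using assms(1-3) by simp
  then show ?thesis using True by linarith
next
  case False
  then have "lam * d\<^sup>2 \<le> lam * (2 * \<delta> * d)"
    using assms(2,5) by (intro mult_left_mono) (auto simp: power2_eq_square)
  then have "d * (\<beta> - 2 * lam * \<delta>) \<le> - l * \<gamma> + lam * l\<^sup>2" using ineq by (simp add: algebra_simps)
  moreover have "d * b \<le> d * (\<beta> - 2 * lam * \<delta>)" using False assms(4) by (intro mult_left_mono) auto
  moreover have "- l * \<gamma> \<le> l * max 0 (- \<gamma>)"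
    using assms(3) mult_left_mono[of "- \<gamma>" "max 0 (- \<gamma>)" l] by simp
  ultimately show ?thesis using assms(1) by (simp add: field_simps)
qed

text \<open>Coordinates \<open>x + s e + t \<nu>\<close> around a frontier point \<open>x\<close>, with \<open>\<nu>\<close> the unit normal and \<open>e\<close>
  a unit tangent vector.\<close>
locale boundary_chart = regular_sublevel +
  fixes x e :: 'a and \<theta> \<delta> :: real
  assumes x_frontier: "x \<in> frontier {z. G z \<le> 1}"
    and e_unit: "norm e = 1" and e_tangent: "inner (gradG x) e = 0"
    and \<theta>_pos: "0 < \<theta>" and \<theta>_small: "\<theta> \<le> 1 / 12"
    and \<delta>_pos: "0 < \<delta>"
    and lam_\<delta>: "2 * lam * \<delta> \<le> norm (gradG x) * \<theta>"
    and mu_\<delta>: "\<And>r. 0 \<le> r \<Longrightarrow> r \<le> 2 * \<delta> \<Longrightarrow> mu r \<le> norm (gradG x) * \<theta>"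
begin

abbreviation "\<alpha> \<equiv> norm (gradG x)"
abbreviation "\<nu> \<equiv> sgn (gradG x)"

lemma alpha_pos: "0 < \<alpha>"
  using norm_gradG_frontier[OF x_frontier] c_pos by linarith

lemma nu_unit: "norm \<nu> = 1"
  using alpha_pos by (simp add: norm_sgn)

lemma inner_nu_e: "inner \<nu> e = 0" "inner e \<nu> = 0"
  using e_tangent alpha_pos by (simp_all add: sgn_div_norm inner_commute)

lemma norm_chart: "(norm (s *\<^sub>R e + t *\<^sub>R \<nu>))\<^sup>2 = s\<^sup>2 + t\<^sup>2"
proof -
  have "orthogonal (s *\<^sub>R e) (t *\<^sub>R \<nu>)" using inner_nu_e by (simp add: orthogonal_def)
  then show ?thesis using e_unit nu_unit by (simp add: norm_add_Pythagorean power_mult_distrib)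
qed

lemma inner_gradG_chart: "inner (gradG x) (s *\<^sub>R e + t *\<^sub>R \<nu>) = \<alpha> * t"
  using e_tangent inner_sgn_self[of "gradG x"] by (simp add: inner_add_right)

lemma norm_chart_le: "norm (s *\<^sub>R e + t *\<^sub>R \<nu>) \<le> \<bar>s\<bar> + \<bar>t\<bar>"
  using norm_triangle_ineq[of "s *\<^sub>R e" "t *\<^sub>R \<nu>"] e_unit nu_unit by simp

lemma gradG_near_x:
  assumes "G p \<le> 1" "norm (p - x) \<le> 2 * \<delta>"
  shows "norm (gradG p - gradG x) \<le> \<alpha> * \<theta>"
  using gradG_modulus[of p x] G_frontier[OF x_frontier] assms mu_\<delta>[of "norm (p - x)"] by simp

lemma lam_\<delta>_small: "lam * \<delta> \<le> \<alpha> / 24"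
  using lam_\<delta> \<theta>_small alpha_pos mult_left_mono[OF \<theta>_small, of \<alpha>] by linarith

lemma below_chart_in_sublevel:
  assumes s: "0 \<le> s" "s \<le> \<delta> / 8"
  shows "G (x + s *\<^sub>R e + (- \<delta> / 2) *\<^sub>R \<nu>) \<le> 1"
proof -
  define q where "q = x + (- \<delta> / 2) *\<^sub>R \<nu>"
  have \<alpha>\<theta>: "\<alpha> * \<theta> \<le> \<alpha> / 12" using \<theta>_small alpha_pos by simp
  have "G (x + (- \<delta> / 2) *\<^sub>R \<nu>) \<le> G x - \<alpha> * \<delta> / 4"
  proof (rule G_segment_descent)
    show "G x \<le> 1" "0 < \<alpha> * \<delta> / 4" using G_frontier[OF x_frontier] alpha_pos \<delta>_pos by auto
    fix t :: real assume t: "0 \<le> t" "t \<le> 1" and in_Z: "G (x + t *\<^sub>R (- \<delta> / 2) *\<^sub>R \<nu>) \<le> 1"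
    have "norm (x + t *\<^sub>R (- \<delta> / 2) *\<^sub>R \<nu> - x) \<le> 2 * \<delta>"
      using t \<delta>_pos nu_unit by (simp add: mult_le_one)
    then have near: "norm (gradG (x + t *\<^sub>R (- \<delta> / 2) *\<^sub>R \<nu>) - gradG x) \<le> \<alpha> * \<theta>"
      using gradG_near_x in_Z by blast
    have "inner (gradG (x + t *\<^sub>R (- \<delta> / 2) *\<^sub>R \<nu>)) ((- \<delta> / 2) *\<^sub>R \<nu>)
        \<le> inner (gradG x) ((- \<delta> / 2) *\<^sub>R \<nu>) + \<alpha> * \<theta> * (\<delta> / 2)"
      using inner_le_of_norm_diff_le[OF near, of "(- \<delta> / 2) *\<^sub>R \<nu>"] nu_unit \<delta>_pos by simp
    also have "\<dots> \<le> - (\<alpha> * \<delta> / 4)"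
    proof -
      have "\<alpha> * \<theta> * (\<delta> / 2) \<le> \<alpha> / 12 * (\<delta> / 2)" using \<alpha>\<theta> \<delta>_pos by (intro mult_right_mono) auto
      moreover have "inner (gradG x) ((- \<delta> / 2) *\<^sub>R \<nu>) = - (\<alpha> * \<delta> / 2)"
        using inner_sgn_self[of "gradG x"] by simp
      ultimately show ?thesis using alpha_pos \<delta>_pos by (simp add: field_simps)
    qed
    finally show "inner (gradG (x + t *\<^sub>R (- \<delta> / 2) *\<^sub>R \<nu>)) ((- \<delta> / 2) *\<^sub>R \<nu>) \<le> - (\<alpha> * \<delta> / 4)" .
  qed
  then have Gq: "G q \<le> 1 - \<alpha> * \<delta> / 4" using G_frontier[OF x_frontier] by (simp add: q_def)
  have "(\<alpha> + \<alpha> * \<theta>) * s \<le> (\<alpha> + \<alpha> / 12) * (\<delta> / 8)"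
    using s \<alpha>\<theta> alpha_pos by (intro mult_mono) auto
  moreover have "norm (s *\<^sub>R e) = s" using s e_unit by simp
  ultimately have small: "G q + (\<alpha> + \<alpha> * \<theta>) * norm (s *\<^sub>R e) < 1"
    using Gq mult_pos_pos[OF alpha_pos \<delta>_pos] by simp
  have "G (q + s *\<^sub>R e) \<le> G q + (\<alpha> + \<alpha> * \<theta>) * norm (s *\<^sub>R e)"
  proof (rule G_segment_lipschitz[OF small])
    show "0 \<le> \<alpha> + \<alpha> * \<theta>" using alpha_pos \<theta>_pos by simp
    fix t :: real assume t: "0 \<le> t" "t \<le> 1" and in_Z: "G (q + t *\<^sub>R s *\<^sub>R e) \<le> 1"
    have "norm (q + t *\<^sub>R s *\<^sub>R e - x) = norm ((t * s) *\<^sub>R e + (- \<delta> / 2) *\<^sub>R \<nu>)"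
      by (simp add: q_def algebra_simps)
    also have "\<dots> \<le> 2 * \<delta>"
      using norm_chart_le[of "t * s" "- \<delta> / 2"] t s \<delta>_pos mult_left_le_one_le[of s t] by simp
    finally have "norm (gradG (q + t *\<^sub>R s *\<^sub>R e) - gradG x) \<le> \<alpha> * \<theta>"
      using gradG_near_x in_Z by blast
    then show "norm (gradG (q + t *\<^sub>R s *\<^sub>R e)) \<le> \<alpha> + \<alpha> * \<theta>"
      using norm_triangle_ineq2[of "gradG (q + t *\<^sub>R s *\<^sub>R e)" "gradG x"] by simp
  qed
  with small show ?thesis by (simp add: q_def algebra_simps)
qed

lemma above_chart_outside:
  assumes s: "0 \<le> s" "s \<le> \<delta> / 8"
  shows "1 < G (x + s *\<^sub>R e + \<delta> *\<^sub>R \<nu>)"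
proof (rule ccontr)
  assume "\<not> ?thesis"
  then have "inner (gradG x) (x + s *\<^sub>R e + \<delta> *\<^sub>R \<nu> - x) \<le> lam * (norm (x + s *\<^sub>R e + \<delta> *\<^sub>R \<nu> - x))\<^sup>2"
    using frontier_inner_gradG_le[OF x_frontier, of "x + s *\<^sub>R e + \<delta> *\<^sub>R \<nu>"] by simp
  then have "\<alpha> * \<delta> \<le> lam * (s\<^sup>2 + \<delta>\<^sup>2)"
    using norm_chart[of s \<delta>] inner_gradG_chart[of s \<delta>] by (simp add: add.assoc)
  also have "\<dots> \<le> lam * ((\<delta> / 8)\<^sup>2 + \<delta>\<^sup>2)"
    using s lam_pos by (intro mult_left_mono add_right_mono power_mono) auto
  also have "\<dots> = (lam * \<delta>) * (65 / 64 * \<delta>)" by (simp add: power2_eq_square)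
  also have "\<dots> \<le> \<alpha> / 24 * (65 / 64 * \<delta>)"
    using lam_\<delta>_small \<delta>_pos by (intro mult_right_mono) auto
  finally show False using alpha_pos \<delta>_pos by (simp add: field_simps)
qed

definition height :: "real \<Rightarrow> real" where
  "height s = Sup {t \<in> {- \<delta>..\<delta>}. G (x + s *\<^sub>R e + t *\<^sub>R \<nu>) \<le> 1}"

definition graph_point :: "real \<Rightarrow> 'a" where
  "graph_point s = x + s *\<^sub>R e + height s *\<^sub>R \<nu>"

lemma height_max:
  assumes "- \<delta> \<le> t" "t \<le> \<delta>" "G (x + s *\<^sub>R e + t *\<^sub>R \<nu>) \<le> 1"
  shows "t \<le> height s"
  unfolding height_def using assms by (intro cSup_upper) (auto intro: bdd_aboveI[of _ \<delta>])

lemma height_mem: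
  assumes s: "0 \<le> s" "s \<le> \<delta> / 8"
  shows "- \<delta> \<le> height s" "height s < \<delta>" "G (graph_point s) \<le> 1"
proof -
  define A where "A = {t \<in> {- \<delta>..\<delta>}. G (x + s *\<^sub>R e + t *\<^sub>R \<nu>) \<le> 1}"
  have "continuous_on UNIV (\<lambda>t. G ((x + s *\<^sub>R e) + t *\<^sub>R \<nu>))"
    using isCont_G_line by (simp add: continuous_at_imp_continuous_on)
  then have "closed ({- \<delta>..\<delta>} \<inter> {t. G ((x + s *\<^sub>R e) + t *\<^sub>R \<nu>) \<le> 1})"
    by (intro closed_Int closed_atLeastAtMost closed_Collect_le continuous_on_const)
  moreover have "A = {- \<delta>..\<delta>} \<inter> {t. G ((x + s *\<^sub>R e) + t *\<^sub>R \<nu>) \<le> 1}"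
    by (auto simp: A_def)
  ultimately have "closed A" by simp
  moreover have "- \<delta> / 2 \<in> A" using below_chart_in_sublevel[OF s] \<delta>_pos by (simp add: A_def)
  moreover have "bdd_above A" by (auto simp: A_def intro: bdd_aboveI[of _ \<delta>])
  ultimately have "height s \<in> A" unfolding height_def A_def[symmetric]
    using closed_contains_Sup by blast
  then show "- \<delta> \<le> height s" "G (graph_point s) \<le> 1" and "height s < \<delta>"
    using above_chart_outside[OF s] by (auto simp: A_def graph_point_def less_le)
qed

lemma graph_point_frontier:
  assumes s: "0 \<le> s" "s \<le> \<delta> / 8"
  shows "graph_point s \<in> frontier Z"
  unfolding frontier_straddle
proof (intro allI impI conjI)
  fix r :: real assume r: "0 < r"
  show "\<exists>y\<in>Z. dist (graph_point s) y < r" using height_mem[OF s] r by force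
  define \<epsilon> where "\<epsilon> = min ((\<delta> - height s) / 2) (r / 2)"
  have "\<epsilon> \<le> (\<delta> - height s) / 2" unfolding \<epsilon>_def by (rule min.cobounded1)
  have "0 < \<epsilon>" "\<epsilon> < r" using height_mem[OF s] r by (auto simp: \<epsilon>_def)
  define t where "t = height s + \<epsilon>"
  have t: "height s < t" "t \<le> \<delta>" "- \<delta> \<le> t" "t - height s < r"
    using \<open>0 < \<epsilon>\<close> \<open>\<epsilon> \<le> (\<delta> - height s) / 2\<close> \<open>\<epsilon> < r\<close> height_mem[OF s] by (auto simp: t_def)
  then have "\<not> G (x + s *\<^sub>R e + t *\<^sub>R \<nu>) \<le> 1" using height_max[of t s] by force
  moreover have "dist (graph_point s) (x + s *\<^sub>R e + t *\<^sub>R \<nu>) = t - height s"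
    using t nu_unit by (simp add: graph_point_def dist_norm norm_minus_commute flip: scaleR_diff_left)
  ultimately show "\<exists>y. y \<notin> Z \<and> dist (graph_point s) y < r" using t by auto
qed

lemma height_0: "height 0 = 0"
proof -
  have "0 \<le> height 0" using height_max[of 0 0] \<delta>_pos G_frontier[OF x_frontier] by simp
  moreover have "\<not> 0 < height 0"
  proof
    assume pos: "0 < height 0"
    have "inner (gradG x) (graph_point 0 - x) \<le> lam * (norm (graph_point 0 - x))\<^sup>2"
      using frontier_inner_gradG_le[OF x_frontier] height_mem[of 0] \<delta>_pos by simp
    then have "\<alpha> * height 0 \<le> (lam * height 0) * height 0"
      using inner_sgn_self[of "gradG x"] nu_unit
      by (simp add: graph_point_def power2_eq_square mult.assoc, simp add: mult.commute)
    then have "\<alpha> \<le> lam * height 0" using pos by (simp add: mult_le_cancel_right_pos)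
    also have "\<dots> \<le> lam * \<delta>" using height_mem[of 0] \<delta>_pos lam_pos by (intro mult_left_mono) auto
    finally show False using lam_\<delta>_small alpha_pos by simp
  qed
  ultimately show ?thesis by simp
qed

definition tangent_slope :: "real \<Rightarrow> real" where
  "tangent_slope s = inner (gradG (graph_point s)) e"

lemma graph_point_diff: "graph_point s - x = s *\<^sub>R e + height s *\<^sub>R \<nu>"
  by (simp add: graph_point_def)

lemma gradG_graph_point_near_x:
  assumes "0 \<le> s" "s \<le> \<delta> / 8"
  shows "norm (gradG (graph_point s) - gradG x) \<le> \<alpha> * \<theta>"
proof (rule gradG_near_x)
  show "G (graph_point s) \<le> 1" using height_mem[OF assms] by simp
  have "norm (graph_point s - x) \<le> \<bar>s\<bar> + \<bar>height s\<bar>"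
    unfolding graph_point_diff by (rule norm_chart_le)
  then show "norm (graph_point s - x) \<le> 2 * \<delta>" using height_mem[OF assms] assms by auto
qed

lemma tangent_slope_bound:
  assumes "0 \<le> s" "s \<le> \<delta> / 8"
  shows "\<bar>tangent_slope s\<bar> \<le> \<alpha> * \<theta>"
proof -
  have "tangent_slope s = inner (gradG (graph_point s) - gradG x) e"
    using e_tangent by (simp add: tangent_slope_def inner_diff_left)
  also have "\<bar>\<dots>\<bar> \<le> norm (gradG (graph_point s) - gradG x)"
    using Cauchy_Schwarz_ineq2[of _ e] e_unit by simp
  finally show ?thesis using gradG_graph_point_near_x[OF assms] by simp
qed

lemma normal_slope_bounds:
  assumes "0 \<le> s" "s \<le> \<delta> / 8"
  shows "\<bar>inner (gradG (graph_point s)) \<nu> - \<alpha>\<bar> \<le> \<alpha> * \<theta>"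
proof -
  have "inner (gradG (graph_point s)) \<nu> - \<alpha> = inner (gradG (graph_point s) - gradG x) \<nu>"
    using inner_sgn_self[of "gradG x"] by (simp add: inner_diff_left)
  also have "\<bar>\<dots>\<bar> \<le> norm (gradG (graph_point s) - gradG x)"
    using Cauchy_Schwarz_ineq2[of _ \<nu>] nu_unit by simp
  finally show ?thesis using gradG_graph_point_near_x[OF assms] by simp
qed

lemma height_increment:
  assumes s: "0 \<le> s" "s \<le> s'" "s' \<le> \<delta> / 8"
  shows "height s' - height s
           \<le> ((s' - s) * max 0 (- tangent_slope s) + lam * (s' - s)\<^sup>2) / (\<alpha> * (1 - 2 * \<theta>))"
proof (rule quadratic_increment_bound[where \<beta> = "inner (gradG (graph_point s)) \<nu>" and \<delta> = \<delta>])
  show "0 < \<alpha> * (1 - 2 * \<theta>)" "0 \<le> lam" "0 \<le> s' - s"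
    using alpha_pos \<theta>_small lam_pos s by auto
  show "\<alpha> * (1 - 2 * \<theta>) + 2 * lam * \<delta> \<le> inner (gradG (graph_point s)) \<nu>"
    using normal_slope_bounds[of s] s lam_\<delta> by (simp add: algebra_simps abs_le_iff)
  show "height s' - height s \<le> 2 * \<delta>" using height_mem[of s] height_mem[of s'] s by auto
  have "graph_point s' - graph_point s = (s' - s) *\<^sub>R e + (height s' - height s) *\<^sub>R \<nu>"
    by (simp add: graph_point_def algebra_simps)
  moreover have "inner (gradG (graph_point s)) (graph_point s' - graph_point s)
      \<le> lam * (norm (graph_point s' - graph_point s))\<^sup>2"
    using frontier_inner_gradG_le[OF graph_point_frontier] height_mem[of s'] s by simp
  ultimately show "(s' - s) * tangent_slope s + (height s' - height s) * inner (gradG (graph_point s)) \<nu>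
      \<le> lam * ((s' - s)\<^sup>2 + (height s' - height s)\<^sup>2)"
    using norm_chart by (simp add: inner_add_right tangent_slope_def mult.commute)
qed

lemma height_le_crude:
  assumes s: "0 \<le> s" "s \<le> \<delta> / 8" and h: "0 \<le> height s"
  shows "height s \<le> 2 * lam * s\<^sup>2 / \<alpha>"
proof -
  have "G (graph_point s) \<le> 1" using height_mem[OF s] by simp
  then have "inner (gradG x) (graph_point s - x) \<le> lam * (norm (graph_point s - x))\<^sup>2"
    by (rule frontier_inner_gradG_le[OF x_frontier])
  then have exterior: "\<alpha> * height s \<le> lam * (s\<^sup>2 + (height s)\<^sup>2)"
    using inner_gradG_chart norm_chart by (simp add: graph_point_diff)
  have "lam * (height s)\<^sup>2 \<le> lam * \<delta> * height s"
    using h height_mem[OF s] lam_pos by (simp add: power2_eq_square mult_right_mono mult.assoc)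
  then have "height s * (\<alpha> - lam * \<delta>) \<le> lam * s\<^sup>2" using exterior by (simp add: algebra_simps)
  moreover have "height s * (\<alpha> / 2) \<le> height s * (\<alpha> - lam * \<delta>)"
    using h lam_\<delta>_small mult_pos_pos[OF lam_pos \<delta>_pos] by (intro mult_left_mono) auto
  ultimately show ?thesis using alpha_pos by (simp add: field_simps)
qed

lemma tangent_slope_semimonotone:
  assumes s: "0 \<le> s" "s \<le> \<delta> / 8" and h: "0 \<le> height s"
  shows "- s * tangent_slope s \<le> lam * (s\<^sup>2 + (height s)\<^sup>2) + \<alpha> * \<theta> * height s"
proof -
  define p where "p = graph_point s"
  define \<beta> where "\<beta> = inner (gradG p) \<nu>"
  have p_Z: "G p \<le> 1" using height_mem[OF s] by (simp add: p_def)
  have "- lam * (norm (x - p))\<^sup>2 \<le> inner (gradG x - gradG p) (x - p)"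
    using gradG_semimonotone[OF x_frontier p_Z] .
  moreover have "inner (gradG x - gradG p) (x - p) = inner (gradG p) (p - x) - inner (gradG x) (p - x)"
    by (simp add: inner_diff_left inner_diff_right)
  moreover have "inner (gradG p) (p - x) = s * tangent_slope s + height s * \<beta>"
    by (simp add: p_def graph_point_diff inner_add_right tangent_slope_def \<beta>_def)
  moreover have "inner (gradG x) (p - x) = \<alpha> * height s"
    using inner_gradG_chart by (simp add: p_def graph_point_diff)
  moreover have "(norm (x - p))\<^sup>2 = s\<^sup>2 + (height s)\<^sup>2"
    using norm_chart[of s "height s"] by (simp add: p_def norm_minus_commute[of x] graph_point_diff)
  ultimately have "- s * tangent_slope s \<le> lam * (s\<^sup>2 + (height s)\<^sup>2) + height s * (\<beta> - \<alpha>)"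
    by (simp add: algebra_simps)
  moreover have "height s * (\<beta> - \<alpha>) \<le> height s * (\<alpha> * \<theta>)"
    using normal_slope_bounds[OF s] h by (intro mult_left_mono) (auto simp: \<beta>_def p_def)
  ultimately show ?thesis by (simp add: mult_ac)
qed

text \<open>Via \<open>height_le_crude\<close> the height is \<open>O(s\<^sup>2)\<close>, so the error terms in
  \<open>tangent_slope_semimonotone\<close> are of higher order.\<close>
lemma tangent_slope_lower:
  assumes s: "0 \<le> s" "s \<le> \<delta> / 8" and h: "0 \<le> height s"
  shows "- tangent_slope s \<le> lam * (1 + 3 * \<theta>) * s"
proof (cases "s = 0")
  case True
  then show ?thesis using e_tangent height_0 by (simp add: tangent_slope_def graph_point_def)
next
  case False
  then have "0 < s" using s by simp
  have h_le: "height s \<le> 2 * lam * s\<^sup>2 / \<alpha>" using height_le_crude[OF s h] .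
  have "lam * (height s)\<^sup>2 \<le> lam * (2 * lam * s\<^sup>2 / \<alpha>)\<^sup>2"
    using h h_le lam_pos by (intro mult_left_mono power_mono) auto
  also have "\<dots> = lam * s\<^sup>2 * ((2 * lam * s)\<^sup>2 / \<alpha>\<^sup>2)"
    using alpha_pos by (simp add: power2_eq_square field_simps)
  also have "\<dots> \<le> lam * s\<^sup>2 * \<theta>"
  proof -
    have "(2 * lam * s)\<^sup>2 \<le> (\<alpha> * \<theta>)\<^sup>2"
    proof (rule power_mono)
      have "2 * lam * s \<le> 2 * lam * \<delta>" using s lam_pos by (intro mult_left_mono) auto
      then show "2 * lam * s \<le> \<alpha> * \<theta>" using lam_\<delta> by linarith
    qed (use s lam_pos in simp)
    also have "\<dots> \<le> \<alpha>\<^sup>2 * \<theta>"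
    proof -
      have "\<alpha>\<^sup>2 * (\<theta> * \<theta>) \<le> \<alpha>\<^sup>2 * \<theta>"
        using \<theta>_pos \<theta>_small by (intro mult_left_mono) (auto simp: mult_left_le_one_le)
      then show ?thesis by (simp add: power_mult_distrib power2_eq_square mult_ac)
    qed
    finally show ?thesis using alpha_pos lam_pos by (intro mult_left_mono) (auto simp: field_simps)
  qed
  finally have "lam * (height s)\<^sup>2 \<le> lam * s\<^sup>2 * \<theta>" .
  moreover have "\<alpha> * \<theta> * height s \<le> 2 * lam * s\<^sup>2 * \<theta>"
    using mult_left_mono[OF h_le, of "\<alpha> * \<theta>"] alpha_pos \<theta>_pos by simp
  ultimately have "s * (- tangent_slope s) \<le> s * (lam * (1 + 3 * \<theta>) * s)"
    using tangent_slope_semimonotone[OF s h] by (simp add: power2_eq_square algebra_simps)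
  then show ?thesis using \<open>0 < s\<close> mult_le_cancel_left_pos by blast
qed

lemma height_step_crude:
  assumes "0 \<le> s" "0 \<le> h" "s + h \<le> \<delta> / 8"
  shows "height (s + h) \<le> height s + (h * (\<alpha> * \<theta>) + lam * h\<^sup>2) / (\<alpha> * (1 - 2 * \<theta>))"
proof -
  have "max 0 (- tangent_slope s) \<le> \<alpha> * \<theta>"
    using tangent_slope_bound[of s] assms alpha_pos \<theta>_pos by auto
  then have "(h * max 0 (- tangent_slope s) + lam * h\<^sup>2) / (\<alpha> * (1 - 2 * \<theta>))
      \<le> (h * (\<alpha> * \<theta>) + lam * h\<^sup>2) / (\<alpha> * (1 - 2 * \<theta>))"
    using assms alpha_pos \<theta>_small by (intro divide_right_mono add_right_mono mult_left_mono) auto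
  then show ?thesis using height_increment[of s "s + h"] assms by simp
qed

lemma height_step_fine:
  assumes "0 \<le> s" "0 \<le> h" "s + h \<le> \<delta> / 8" "0 \<le> height s"
  shows "height (s + h) \<le> height s + (lam * (1 + 3 * \<theta>) * s * h + lam * h\<^sup>2) / (\<alpha> * (1 - 2 * \<theta>))"
proof -
  have "max 0 (- tangent_slope s) \<le> lam * (1 + 3 * \<theta>) * s"
    using tangent_slope_lower[of s] assms lam_pos \<theta>_pos by auto
  then have "h * max 0 (- tangent_slope s) \<le> h * (lam * (1 + 3 * \<theta>) * s)"
    using assms(2) by (rule mult_left_mono)
  then have "(h * max 0 (- tangent_slope s) + lam * h\<^sup>2) / (\<alpha> * (1 - 2 * \<theta>))
      \<le> (lam * (1 + 3 * \<theta>) * s * h + lam * h\<^sup>2) / (\<alpha> * (1 - 2 * \<theta>))"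
    using alpha_pos \<theta>_small by (intro divide_right_mono) (auto simp: mult_ac)
  then show ?thesis using height_increment[of s "s + h"] assms by simp
qed

text \<open>The factor \<open>1/2\<close> missing from the crude bound comes from integrating the linear slope
  bound along a grid of mesh \<open>l / N\<close> and letting \<open>N \<rightarrow> \<infinity>\<close>.\<close>
lemma height_quadratic:
  assumes l: "0 \<le> l" "l \<le> \<delta> / 8"
  shows "height l \<le> lam * (1 + 3 * \<theta>) / (2 * (\<alpha> * (1 - 2 * \<theta>))) * l\<^sup>2"
proof -
  define b where "b = \<alpha> * (1 - 2 * \<theta>)"
  define L where "L = lam * (1 + 3 * \<theta>)"
  have b: "0 < b" using alpha_pos \<theta>_small by (simp add: b_def)
  have L: "0 \<le> L" using lam_pos \<theta>_pos by (simp add: L_def)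
  have "height l \<le> L / (2 * b) * l\<^sup>2 + (2 * lam * l\<^sup>2 + l * (\<alpha> * \<theta>)) / b / real N"
    if "0 < N" for N
  proof -
    define h where "h = l / real N"
    define F where "F i = height (real i * h)" for i
    have "l * 1 \<le> l * real N" using l \<open>0 < N\<close> by (intro mult_left_mono) auto
    then have h: "0 \<le> h" "h \<le> l" "real N * h = l"
      using l \<open>0 < N\<close> by (auto simp: h_def field_simps)
    have grid: "0 \<le> real i * h" "real i * h + h \<le> \<delta> / 8" if "i < N" for i
    proof -
      have "real (Suc i) * h \<le> real N * h" using that h by (intro mult_right_mono) auto
      then show "0 \<le> real i * h" "real i * h + h \<le> \<delta> / 8" using h l by (auto simp: algebra_simps)
    qed
    have "F N \<le> L * h\<^sup>2 / b * (real N)\<^sup>2 / 2 + real N * (lam * h\<^sup>2 / b) + (h * (\<alpha> * \<theta>) + lam * h\<^sup>2) / b"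
    proof (rule discrete_quadratic_growth)
      show "F 0 = 0" using height_0 by (simp add: F_def)
      show "0 \<le> L * h\<^sup>2 / b" "0 \<le> (h * (\<alpha> * \<theta>) + lam * h\<^sup>2) / b" "0 \<le> lam * h\<^sup>2 / b"
        using b L h alpha_pos \<theta>_pos lam_pos by auto
      show "F (Suc i) \<le> F i + (h * (\<alpha> * \<theta>) + lam * h\<^sup>2) / b" if "i < N" for i
        using height_step_crude[OF grid(1)[OF that] h(1) grid(2)[OF that]] by (simp add: F_def b_def algebra_simps)
      show "F (Suc i) \<le> F i + L * h\<^sup>2 / b * real i + lam * h\<^sup>2 / b" if "i < N" "0 \<le> F i" for i
      proof -
        have "(L * (real i * h) * h + lam * h\<^sup>2) / b = L * h\<^sup>2 / b * real i + lam * h\<^sup>2 / b"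
          by (simp add: add_divide_distrib power2_eq_square mult_ac)
        then show ?thesis using height_step_fine[OF grid(1)[OF that(1)] h(1) grid(2)[OF that(1)]] that(2)
          by (simp add: F_def b_def L_def algebra_simps)
      qed
    qed
    also have "\<dots> = L / (2 * b) * l\<^sup>2 + (lam * l * h + h * (\<alpha> * \<theta>) + lam * h\<^sup>2) / b"
    proof -
      have "L * h\<^sup>2 / b * (real N)\<^sup>2 / 2 = L / (2 * b) * (real N * h)\<^sup>2"
        using b by (simp add: power_mult_distrib field_simps)
      moreover have "real N * (lam * h\<^sup>2 / b) = lam * (real N * h) * h / b"
        by (simp add: power2_eq_square)
      moreover have "(lam * l * h + h * (\<alpha> * \<theta>) + lam * h\<^sup>2) / b
          = lam * l * h / b + (h * (\<alpha> * \<theta>) + lam * h\<^sup>2) / b"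
        by (simp add: add_divide_distrib)
      ultimately show ?thesis unfolding h(3) by linarith
    qed
    also have "\<dots> \<le> L / (2 * b) * l\<^sup>2 + h * (2 * lam * l + \<alpha> * \<theta>) / b"
    proof -
      have "lam * h\<^sup>2 \<le> lam * l * h"
        using h lam_pos by (simp add: power2_eq_square mult_right_mono mult_left_mono)
      then have "lam * l * h + h * (\<alpha> * \<theta>) + lam * h\<^sup>2 \<le> h * (2 * lam * l + \<alpha> * \<theta>)"
        by (simp add: algebra_simps)
      then show ?thesis using b by (simp add: divide_right_mono)
    qed
    also have "h * (2 * lam * l + \<alpha> * \<theta>) / b = (2 * lam * l\<^sup>2 + l * (\<alpha> * \<theta>)) / b / real N"
      using \<open>0 < N\<close> b by (simp add: h_def power2_eq_square field_simps)
    also have "F N = height l" using h(3) by (simp add: F_def)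
    finally show ?thesis .
  qed
  then have "height l \<le> L / (2 * b) * l\<^sup>2" by (rule le_of_forall_le_plus_divide_nat)
  then show ?thesis by (simp only: L_def b_def)
qed

end

lemma chart_constant_le:
  fixes lam a \<theta> \<eta> :: real
  assumes "0 < lam" "0 < a" "0 < \<theta>" "\<theta> \<le> 1 / 12" "3 * lam * \<theta> \<le> \<eta> * a"
  shows "lam * (1 + 3 * \<theta>) / (2 * (a * (1 - 2 * \<theta>))) \<le> lam / (2 * a) + \<eta>"
proof -
  have "1 + 3 * \<theta> \<le> (1 + 6 * \<theta>) * (1 - 2 * \<theta>)"
    using assms(3,4) by (simp add: algebra_simps)
  then have "lam * (1 + 3 * \<theta>) / (2 * (a * (1 - 2 * \<theta>))) \<le> lam * (1 + 6 * \<theta>) / (2 * a)"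
    using assms by (simp add: field_simps mult_left_mono)
  also have "\<dots> = lam / (2 * a) + 3 * lam * \<theta> / a" using assms(2) by (simp add: field_simps)
  also have "\<dots> \<le> lam / (2 * a) + \<eta>" using assms(2,5) by (simp add: field_simps)
  finally show ?thesis .
qed

context regular_sublevel
begin

lemma local_normal_bound:
  assumes x: "x \<in> frontier Z" and \<eta>: "0 < \<eta>"
  shows "\<exists>D>0. \<forall>w. G w \<le> 1 \<longrightarrow> norm (w - x) < D \<longrightarrow>
           inner (sgn (gradG x)) (w - x) \<le> (lam / (2 * norm (gradG x)) + \<eta>) * (norm (w - x))\<^sup>2"
proof -
  define a where "a = norm (gradG x)"
  define \<nu> where "\<nu> = sgn (gradG x)"
  have a: "0 < a" using norm_gradG_frontier[OF x] c_pos unfolding a_def by linarith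
  have \<nu>: "norm \<nu> = 1" "inner \<nu> \<nu> = 1" "gradG x = a *\<^sub>R \<nu>"
    using a eq_norm_scaleR_sgn[of "gradG x"]
    by (auto simp: \<nu>_def a_def norm_sgn power2_norm_eq_inner[symmetric])
  define \<theta> where "\<theta> = min (1 / 12) (\<eta> * a / (3 * lam))"
  have \<theta>: "0 < \<theta>" "\<theta> \<le> 1 / 12" "3 * lam * \<theta> \<le> \<eta> * a"
    using \<eta> a lam_pos by (auto simp: \<theta>_def min_def field_simps)
  obtain d where "0 < d" and d: "\<And>s. 0 \<le> s \<Longrightarrow> s \<le> d \<Longrightarrow> mu s \<le> a * \<theta>"
    using mu_small_near_0[of "a * \<theta>"] a \<theta> by auto
  define \<delta> where "\<delta> = min (d / 2) (a * \<theta> / (2 * lam))"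
  have \<delta>: "0 < \<delta>" "2 * lam * \<delta> \<le> a * \<theta>" "2 * \<delta> \<le> d"
    using \<open>0 < d\<close> a \<theta> lam_pos by (auto simp: \<delta>_def min_def field_simps)
  show ?thesis
  proof (intro exI[of _ "\<delta> / 8"] conjI allI impI)
    show "0 < \<delta> / 8" using \<delta> by simp
    fix w assume w: "G w \<le> 1" "norm (w - x) < \<delta> / 8"
    define \<tau> where "\<tau> = inner \<nu> (w - x)"
    define r where "r = (w - x) - \<tau> *\<^sub>R \<nu>"
    have r\<nu>: "inner r \<nu> = 0" "inner (gradG x) r = 0"
      using \<nu> by (simp_all add: r_def \<tau>_def inner_diff_left inner_diff_right inner_commute)
    have wx: "w = x + norm r *\<^sub>R sgn r + \<tau> *\<^sub>R \<nu>"
      using eq_norm_scaleR_sgn[of r, symmetric] unfolding r_def by simp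
    have "orthogonal r (\<tau> *\<^sub>R \<nu>)" using r\<nu> by (simp add: orthogonal_def)
    moreover have "w - x = r + \<tau> *\<^sub>R \<nu>" unfolding r_def by (rule diff_add_cancel[symmetric])
    ultimately have norm_wx: "(norm (w - x))\<^sup>2 = (norm r)\<^sup>2 + \<tau>\<^sup>2"
      using norm_add_Pythagorean[of r "\<tau> *\<^sub>R \<nu>"] \<nu>(1) by (simp add: power_mult_distrib)
    have "(norm r)\<^sup>2 \<le> (norm (w - x))\<^sup>2" "\<tau>\<^sup>2 \<le> (norm (w - x))\<^sup>2" using norm_wx by simp_all
    then have r_le: "norm r \<le> norm (w - x)" and \<tau>_le: "\<bar>\<tau>\<bar> \<le> norm (w - x)"
      using abs_le_square_iff[of \<tau> "norm (w - x)"] by (auto intro: power2_le_imp_le)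
    show "inner (sgn (gradG x)) (w - x) \<le> (lam / (2 * norm (gradG x)) + \<eta>) * (norm (w - x))\<^sup>2"
    proof (cases "\<tau> \<le> 0")
      case True
      then have "inner (sgn (gradG x)) (w - x) \<le> 0" by (simp add: \<tau>_def \<nu>_def)
      moreover have "0 \<le> (lam / (2 * norm (gradG x)) + \<eta>) * (norm (w - x))\<^sup>2"
        using lam_pos \<eta> by simp
      ultimately show ?thesis by linarith
    next
      case False
      have "r \<noteq> 0"
      proof
        assume "r = 0"
        then have "w - x = \<tau> *\<^sub>R \<nu>" by (simp add: r_def)
        then have "a * \<tau> \<le> lam * \<tau>\<^sup>2"
          using frontier_inner_gradG_le[OF x w(1)] \<nu> by (simp add: power_mult_distrib mult.commute)
        then have "a \<le> lam * \<tau>" using False by (simp add: power2_eq_square)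
        also have "\<dots> \<le> lam * (\<delta> / 8)" using \<tau>_le w(2) lam_pos by (intro mult_left_mono) auto
        moreover have "a * \<theta> \<le> a * (1 / 12)" using a \<theta> by (intro mult_left_mono) auto
        ultimately show False using \<delta> a by linarith
      qed
      interpret chart: boundary_chart G gradG mu lam c x "sgn r" \<theta> \<delta>
        using x \<theta> \<delta> d r\<nu> \<open>r \<noteq> 0\<close>
        by unfold_locales (auto simp: a_def norm_sgn sgn_div_norm)
      have "\<tau> \<le> chart.height (norm r)"
        using chart.height_max[of \<tau> "norm r"] \<tau>_le w wx by (simp add: \<nu>_def)
      also have "\<dots> \<le> lam * (1 + 3 * \<theta>) / (2 * (a * (1 - 2 * \<theta>))) * (norm r)\<^sup>2"
        using chart.height_quadratic[of "norm r"] r_le w(2) by (simp add: a_def)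
      also have "\<dots> \<le> (lam / (2 * a) + \<eta>) * (norm r)\<^sup>2"
        using chart_constant_le[OF lam_pos a \<theta>] by (intro mult_right_mono) auto
      also have "\<dots> \<le> (lam / (2 * a) + \<eta>) * (norm (w - x))\<^sup>2"
        using r_le lam_pos a \<eta> by (intro mult_left_mono power_mono) auto
      finally show ?thesis by (simp add: \<tau>_def \<nu>_def a_def)
    qed
  qed
qed

section \<open>Exterior balls\<close>

text \<open>If \<open>Z\<close> avoids the ball \<open>B(q, \<rho>)\<close> and the frontier point \<open>w\<close> almost touches its sphere, then
  the outer normal at \<open>w\<close> almost points to the centre \<open>q\<close>: otherwise the direction bisecting
  \<open>q - w\<close> and \<open>-\<nabla>G w\<close> would lead from \<open>w\<close> into the ball while staying in \<open>Z\<close>.\<close>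
lemma sgn_gradG_near_contact:
  assumes w: "w \<in> frontier Z" and \<rho>: "0 < \<rho>"
    and ball: "\<And>y. G y \<le> 1 \<Longrightarrow> \<rho> \<le> norm (y - q)"
    and k: "0 < k" and t1: "0 < t1" "\<And>s. 0 \<le> s \<Longrightarrow> s \<le> t1 \<Longrightarrow> mu s \<le> c * k / 4"
    and near: "(norm (w - q))\<^sup>2 - \<rho>\<^sup>2 < min t1 (k * norm (w - q) / 2) * k * norm (w - q) / 2"
  shows "norm (sgn (w - q) + sgn (gradG w)) \<le> k"
proof (rule ccontr)
  assume far: "\<not> ?thesis"
  define R where "R = norm (w - q)"
  have Gw: "G w = 1" using G_frontier[OF w] .
  have R: "\<rho> \<le> R" "0 < R" using ball[of w] Gw \<rho> by (auto simp: R_def)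
  define b where "b = norm (gradG w)"
  have b: "c \<le> b" "0 < b" using norm_gradG_frontier[OF w] c_pos by (auto simp: b_def)
  define e where "e = sgn (w - q)"
  define n where "n = sgn (gradG w)"
  have e: "norm e = 1" "w - q = R *\<^sub>R e"
    using R eq_norm_scaleR_sgn[of "w - q"] by (auto simp: e_def R_def norm_sgn)
  have n: "norm n = 1" "gradG w = b *\<^sub>R n"
    using b eq_norm_scaleR_sgn[of "gradG w"] by (auto simp: n_def b_def norm_sgn)
  define \<theta> where "\<theta> = norm (e + n)"
  have \<theta>: "k < \<theta>" "0 < \<theta>" using far k unfolding \<theta>_def e_def n_def by linarith+
  define u where "u = - sgn (e + n)"
  have u: "norm u = 1" "inner e u = - \<theta> / 2" "inner n u = - \<theta> / 2"
    using inner_sgn_add_unit[OF e(1) n(1)] \<theta> by (simp_all add: u_def \<theta>_def norm_sgn)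
  define t where "t = min t1 (\<theta> * R / 2)"
  have t: "0 < t" "t \<le> t1" "t \<le> \<theta> * R / 2" using t1 \<theta> R by (auto simp: t_def)
  have "G (w + t *\<^sub>R u) \<le> G w - t * (b * \<theta> / 4)"
  proof (rule G_segment_descent)
    show "G w \<le> 1" "0 < t * (b * \<theta> / 4)" using Gw t b \<theta> by auto
    fix s :: real assume s: "0 \<le> s" "s \<le> 1" and in_Z: "G (w + s *\<^sub>R t *\<^sub>R u) \<le> 1"
    have "norm (gradG (w + s *\<^sub>R t *\<^sub>R u) - gradG w) \<le> mu (s * t)"
      using gradG_modulus[OF in_Z, of w] Gw s t u by simp
    also have "\<dots> \<le> c * k / 4"
    proof (rule t1(2))
      show "s * t \<le> t1" using s t mult_left_le_one_le[of t s] by linarith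
    qed (use s t in simp)
    also have "\<dots> \<le> b * \<theta> / 4" using b \<theta> k c_pos by (intro divide_right_mono mult_mono) auto
    finally have "inner (gradG (w + s *\<^sub>R t *\<^sub>R u)) u \<le> inner (gradG w) u + b * \<theta> / 4"
      using inner_le_of_norm_diff_le[of _ _ _ u] u(1) by (metis mult.right_neutral)
    also have "inner (gradG w) u = - (b * \<theta> / 2)" using u(3) by (simp add: n(2))
    finally have "inner (gradG (w + s *\<^sub>R t *\<^sub>R u)) u \<le> - (b * \<theta> / 4)" by (simp add: mult.commute)
    then have "t * inner (gradG (w + s *\<^sub>R t *\<^sub>R u)) u \<le> t * - (b * \<theta> / 4)"
      using t by (intro mult_left_mono) auto
    then show "inner (gradG (w + s *\<^sub>R t *\<^sub>R u)) (t *\<^sub>R u) \<le> - (t * (b * \<theta> / 4))" by simp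
  qed
  moreover have "0 < t * (b * \<theta> / 4)" using t b \<theta> by simp
  ultimately have "G (w + t *\<^sub>R u) \<le> 1" using Gw by linarith
  then have "\<rho>\<^sup>2 \<le> (norm (w + t *\<^sub>R u - q))\<^sup>2" using ball \<rho> by (simp add: power_mono)
  also have "(norm (w + t *\<^sub>R u - q))\<^sup>2 = R\<^sup>2 - t * \<theta> * R + t\<^sup>2"
    using power2_norm_add_scaleR[OF e(1) u(1), of R t] u(2) e(2)
    by (simp add: algebra_simps)
  also have "t\<^sup>2 \<le> t * (\<theta> * R / 2)" using t by (simp add: power2_eq_square mult_left_mono)
  finally have "\<rho>\<^sup>2 \<le> R\<^sup>2 - t * \<theta> * R + t * (\<theta> * R / 2)" by simp
  moreover have "t * (\<theta> * R / 2) = t * \<theta> * R / 2" by simp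
  ultimately have "t * \<theta> * R / 2 \<le> R\<^sup>2 - \<rho>\<^sup>2" by linarith
  moreover have "min t1 (k * R / 2) * k * R / 2 \<le> t * \<theta> * R / 2"
  proof -
    have "min t1 (k * R / 2) \<le> t" using \<theta> R unfolding t_def by (intro min.mono) auto
    then have "min t1 (k * R / 2) * k \<le> t * \<theta>" using \<theta> k t1(1) t R by (intro mult_mono) auto
    then show ?thesis using R by (simp add: divide_right_mono mult_right_mono)
  qed
  ultimately show False using near by (simp add: R_def)
qed

lemma sgn_gradG_near_sphere:
  assumes \<rho>: "0 < \<rho>" and ball: "\<And>y. G y \<le> 1 \<Longrightarrow> \<rho> \<le> norm (y - q)" and k: "0 < k"
  shows "\<exists>\<kappa>>0. \<forall>w\<in>frontier Z. (norm (w - q))\<^sup>2 < \<rho>\<^sup>2 + \<kappa> \<longrightarrow>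
           norm (sgn (gradG w) + (1 / \<rho>) *\<^sub>R (w - q)) \<le> k"
proof -
  obtain t1 where "0 < t1" and t1: "\<And>s. 0 \<le> s \<Longrightarrow> s \<le> t1 \<Longrightarrow> mu s \<le> c * (k / 2) / 4"
    using mu_small_near_0[of "c * (k / 2) / 4"] c_pos k by auto
  define \<kappa> where "\<kappa> = min (min t1 (k / 2 * \<rho> / 2) * (k / 2) * \<rho> / 2) (k * \<rho>\<^sup>2)"
  have "0 < \<kappa>" using \<open>0 < t1\<close> k \<rho> by (simp add: \<kappa>_def)
  moreover have "norm (sgn (gradG w) + (1 / \<rho>) *\<^sub>R (w - q)) \<le> k"
    if w: "w \<in> frontier Z" and near: "(norm (w - q))\<^sup>2 < \<rho>\<^sup>2 + \<kappa>" for w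
  proof -
    define R where "R = norm (w - q)"
    have R: "\<rho> \<le> R" using ball G_frontier[OF w] by (simp add: R_def)
    have "min t1 (k / 2 * \<rho> / 2) * (k / 2) * \<rho> / 2 \<le> min t1 (k / 2 * R / 2) * (k / 2) * R / 2"
      using R \<rho> k \<open>0 < t1\<close> by (intro divide_right_mono mult_mono min.mono) auto
    then have "R\<^sup>2 - \<rho>\<^sup>2 < min t1 (k / 2 * R / 2) * (k / 2) * R / 2"
      using near by (simp add: R_def \<kappa>_def)
    then have tangent: "norm (sgn (w - q) + sgn (gradG w)) \<le> k / 2"
      using sgn_gradG_near_contact[OF w \<rho> ball _ \<open>0 < t1\<close> t1] k by (simp add: R_def)
    have "(R - \<rho>) * (2 * \<rho>) \<le> (R - \<rho>) * (R + \<rho>)" using R by (intro mult_left_mono) auto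
    also have "\<dots> = R\<^sup>2 - \<rho>\<^sup>2" by (simp add: power2_eq_square algebra_simps)
    also have "\<dots> < k * \<rho>\<^sup>2" using near by (simp add: R_def \<kappa>_def)
    also have "k * \<rho>\<^sup>2 = (k / 2 * \<rho>) * (2 * \<rho>)" by (simp add: power2_eq_square)
    finally have "R - \<rho> < k / 2 * \<rho>" using \<rho> by (simp only: mult_less_cancel_right_pos)
    then have "(R - \<rho>) / \<rho> \<le> k / 2" using \<rho> by (simp add: field_simps)
    moreover have "norm ((1 / \<rho>) *\<^sub>R (w - q) - sgn (w - q)) = (R - \<rho>) / \<rho>"
    proof -
      have "(1 / \<rho>) *\<^sub>R (R *\<^sub>R s) - s = (R / \<rho> - 1) *\<^sub>R s" for s :: 'a
        by (simp add: scaleR_diff_left)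
      moreover have "w - q = R *\<^sub>R sgn (w - q)" unfolding R_def by (rule eq_norm_scaleR_sgn)
      ultimately have "(1 / \<rho>) *\<^sub>R (w - q) - sgn (w - q) = (R / \<rho> - 1) *\<^sub>R sgn (w - q)"
        by metis
      moreover have "w - q \<noteq> 0" using R \<rho> by (auto simp: R_def)
      then have "norm (sgn (w - q)) = 1" by (simp add: norm_sgn)
      ultimately show ?thesis using R \<rho> by (simp add: field_simps)
    qed
    moreover have "norm (sgn (gradG w) + (1 / \<rho>) *\<^sub>R (w - q))
        \<le> norm (sgn (w - q) + sgn (gradG w)) + norm ((1 / \<rho>) *\<^sub>R (w - q) - sgn (w - q))"
      by (rule order_trans[OF _ norm_triangle_ineq]) (simp add: algebra_simps)
    ultimately show ?thesis using tangent by linarith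
  qed
  ultimately show ?thesis by blast
qed

text \<open>The supremum of \<open>normal_quotient x\<close> over \<open>Z\<close> is \<open>1/(2\<rho>)\<close>, where \<open>\<rho>\<close> is the radius of the
  largest open ball centred at \<open>x + \<rho> \<nu>\<close> that misses \<open>Z\<close>.\<close>
definition normal_quotient :: "'a \<Rightarrow> 'a \<Rightarrow> real" where
  "normal_quotient x y = inner (sgn (gradG x)) (y - x) / (norm (y - x))\<^sup>2"

definition normal_quotient_sup :: "'a \<Rightarrow> real" where
  "normal_quotient_sup x = Sup (normal_quotient x ` (Z - {x}))"

lemma normal_quotient_le_crude:
  assumes x: "x \<in> frontier Z" and y: "G y \<le> 1"
  shows "normal_quotient x y \<le> lam / norm (gradG x)"
proof -
  have a: "0 < norm (gradG x)" using norm_gradG_frontier[OF x] c_pos by linarith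
  have "norm (gradG x) * inner (sgn (gradG x)) (y - x) \<le> lam * (norm (y - x))\<^sup>2"
    using frontier_inner_gradG_le[OF x y] eq_norm_scaleR_sgn[of "gradG x"]
    by (metis inner_scaleR_left)
  then have "inner (sgn (gradG x)) (y - x) \<le> lam / norm (gradG x) * (norm (y - x))\<^sup>2"
    using a by (simp add: field_simps)
  then show ?thesis using lam_pos a by (cases "y = x") (simp_all add: normal_quotient_def divide_le_eq)
qed

lemma bdd_above_normal_quotient: "x \<in> frontier Z \<Longrightarrow> bdd_above (normal_quotient x ` (Z - {x}))"
  using normal_quotient_le_crude by (auto intro: bdd_aboveI[of _ "lam / norm (gradG x)"])

lemma normal_quotient_le_sup:
  assumes "x \<in> frontier Z" "G y \<le> 1" "y \<noteq> x"
  shows "normal_quotient x y \<le> normal_quotient_sup x"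
  unfolding normal_quotient_sup_def using assms bdd_above_normal_quotient by (auto intro: cSup_upper)

lemma inner_le_normal_quotient_sup:
  assumes "x \<in> frontier Z" "G y \<le> 1"
  shows "inner (sgn (gradG x)) (y - x) \<le> normal_quotient_sup x * (norm (y - x))\<^sup>2"
  using normal_quotient_le_sup[OF assms] by (cases "y = x") (simp_all add: normal_quotient_def divide_le_eq)

lemma exists_frontier_normal_quotient_ge:
  assumes x: "x \<in> frontier Z" and y: "G y \<le> 1" and pos: "0 < normal_quotient x y"
  shows "\<exists>w\<in>frontier Z. w \<noteq> x \<and> normal_quotient x y \<le> normal_quotient x w"
proof -
  define v where "v = y - x"
  have "0 < inner (sgn (gradG x)) v" "v \<noteq> 0"
    using pos by (auto simp: normal_quotient_def v_def zero_less_divide_iff)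
  then have "0 < inner (gradG x) (y - x)"
    using norm_gradG_frontier[OF x] c_pos by (simp add: sgn_div_norm v_def zero_less_mult_iff)
  then obtain s where s: "0 < s" "s \<le> 1" and w: "x + s *\<^sub>R v \<in> frontier Z"
    using first_return_to_sublevel[OF x y] by (auto simp: v_def)
  have "normal_quotient x (x + s *\<^sub>R v) = normal_quotient x y / s"
    using s \<open>v \<noteq> 0\<close> by (simp add: normal_quotient_def v_def power_mult_distrib power2_eq_square)
  also have "\<dots> \<ge> normal_quotient x y" using s pos by (simp add: le_divide_eq mult_left_le_one_le)
  finally have "normal_quotient x y \<le> normal_quotient x (x + s *\<^sub>R v)" .
  moreover have "x + s *\<^sub>R v \<noteq> x" using s \<open>v \<noteq> 0\<close> by simp
  ultimately show ?thesis using w by blast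
qed

lemma far_frontier_points_near_sup:
  assumes x: "x \<in> frontier Z" and z: "G z \<le> 1" "z \<noteq> x"
    and S: "lam / (2 * norm (gradG x)) < normal_quotient_sup x"
  shows "\<exists>D0>0. \<forall>\<epsilon>. 0 < \<epsilon> \<longrightarrow> 2 * \<epsilon> \<le> normal_quotient_sup x - lam / (2 * norm (gradG x)) \<longrightarrow>
           (\<exists>w\<in>frontier Z. D0 \<le> norm (w - x) \<and>
              (normal_quotient_sup x - \<epsilon>) * (norm (w - x))\<^sup>2 < inner (sgn (gradG x)) (w - x))"
proof -
  define L where "L = lam / (2 * norm (gradG x))"
  define S where "S = normal_quotient_sup x"
  have "0 \<le> L" using lam_pos by (simp add: L_def)
  define \<eta> where "\<eta> = (S - L) / 2"
  have "0 < \<eta>" using S by (simp add: \<eta>_def L_def S_def)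
  then obtain D0 where "0 < D0" and local: "\<And>w. G w \<le> 1 \<Longrightarrow> norm (w - x) < D0 \<Longrightarrow>
      inner (sgn (gradG x)) (w - x) \<le> (L + \<eta>) * (norm (w - x))\<^sup>2"
    using local_normal_bound[OF x] by (auto simp: L_def)
  have "\<exists>w\<in>frontier Z. D0 \<le> norm (w - x) \<and> (S - \<epsilon>) * (norm (w - x))\<^sup>2 < inner (sgn (gradG x)) (w - x)"
    if \<epsilon>: "0 < \<epsilon>" "2 * \<epsilon> \<le> S - L" for \<epsilon>
  proof -
    obtain w where w: "w \<in> frontier Z" "w \<noteq> x" and quot: "S - \<epsilon> < normal_quotient x w"
    proof -
      have ne: "normal_quotient x ` (Z - {x}) \<noteq> {}" using z by auto
      have "S - \<epsilon> < Sup (normal_quotient x ` (Z - {x}))"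
        using \<epsilon> by (simp add: S_def normal_quotient_sup_def)
      then have "\<exists>r\<in>normal_quotient x ` (Z - {x}). S - \<epsilon> < r"
        by (simp only: less_cSup_iff[OF ne bdd_above_normal_quotient[OF x]])
      then obtain y where y: "G y \<le> 1" "S - \<epsilon> < normal_quotient x y" by blast
      moreover have "0 < normal_quotient x y" using y \<epsilon> \<open>0 \<le> L\<close> by linarith
      ultimately obtain w where "w \<in> frontier Z" "w \<noteq> x" "normal_quotient x y \<le> normal_quotient x w"
        using exists_frontier_normal_quotient_ge[OF x] by blast
      then show ?thesis using y(2) that[of w] by linarith
    qed
    have lower: "(S - \<epsilon>) * (norm (w - x))\<^sup>2 < inner (sgn (gradG x)) (w - x)"
      using quot w by (simp add: normal_quotient_def less_divide_eq)
    have "D0 \<le> norm (w - x)"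
    proof (rule ccontr)
      assume "\<not> D0 \<le> norm (w - x)"
      then have "inner (sgn (gradG x)) (w - x) \<le> (L + \<eta>) * (norm (w - x))\<^sup>2"
        using local G_frontier[OF w(1)] by simp
      also have "\<dots> \<le> (S - \<epsilon>) * (norm (w - x))\<^sup>2"
      proof (rule mult_right_mono)
        show "L + \<eta> \<le> S - \<epsilon>" unfolding \<eta>_def using \<epsilon> by (simp add: field_simps)
      qed simp
      finally show False using lower by simp
    qed
    then show ?thesis using w lower by blast
  qed
  then show ?thesis using \<open>0 < D0\<close> by (auto simp: S_def L_def)
qed

lemma gradG_semimonotone_sgn:
  assumes "x \<in> frontier Z" "G w \<le> 1"
  shows "norm (gradG x) * inner (sgn (gradG x)) (w - x) + norm (gradG w) * inner (sgn (gradG w)) (x - w)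
           \<le> lam * (norm (w - x))\<^sup>2"
proof -
  have "- lam * (norm (x - w))\<^sup>2 \<le> inner (gradG x - gradG w) (x - w)"
    using gradG_semimonotone[OF assms] .
  moreover have "inner (gradG y) v = norm (gradG y) * inner (sgn (gradG y)) v" for y v
    using eq_norm_scaleR_sgn[of "gradG y"] by (metis inner_scaleR_left)
  moreover have "inner (gradG x - gradG w) (x - w) = - inner (gradG x) (w - x) - inner (gradG w) (x - w)"
    by (simp add: inner_diff_left inner_diff_right)
  ultimately show ?thesis by (simp add: norm_minus_commute)
qed

theorem normal_quotient_sup_le:
  assumes x: "x \<in> frontier Z" and z: "G z \<le> 1" "z \<noteq> x"
  shows "normal_quotient_sup x \<le> lam / (norm (gradG x) + c)"
proof (rule ccontr)
  define S where "S = normal_quotient_sup x"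
  define a where "a = norm (gradG x)"
  define \<nu> where "\<nu> = sgn (gradG x)"
  assume "\<not> ?thesis"
  then have S_gt: "lam / (a + c) < S" by (simp add: S_def a_def)
  have a: "c \<le> a" "0 < a" using norm_gradG_frontier[OF x] c_pos by (auto simp: a_def)
  have \<nu>: "norm \<nu> = 1" using a by (simp add: \<nu>_def a_def norm_sgn)
  have hS: "inner \<nu> (y - x) \<le> S * (norm (y - x))\<^sup>2" if "G y \<le> 1" for y
    using inner_le_normal_quotient_sup[OF x that] by (simp add: S_def \<nu>_def)
  define \<Delta> where "\<Delta> = (a + c) * S - lam"
  have \<Delta>: "0 < \<Delta>" using S_gt a c_pos by (simp add: \<Delta>_def field_simps)
  have S: "0 < S" using S_gt a c_pos lam_pos by (smt (verit) divide_pos_pos)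
  define L where "L = lam / (2 * a)"
  have "L \<le> lam / (a + c)" using a lam_pos c_pos unfolding L_def by (intro divide_left_mono) auto
  then obtain D0 where "0 < D0" and far: "\<And>\<epsilon>. 0 < \<epsilon> \<Longrightarrow> 2 * \<epsilon> \<le> S - L \<Longrightarrow>
      \<exists>w\<in>frontier Z. D0 \<le> norm (w - x) \<and> (S - \<epsilon>) * (norm (w - x))\<^sup>2 < inner \<nu> (w - x)"
    using far_frontier_points_near_sup[OF x z] S_gt by (auto simp: S_def a_def \<nu>_def L_def)
  define m where "m = (S - L) / 2"
  have m: "0 < m" "2 * m = S - L" using \<open>L \<le> lam / (a + c)\<close> S_gt by (simp_all add: m_def)
  define \<sigma> where "\<sigma> = \<Delta> / (4 * (a + c))"
  have \<sigma>: "0 < \<sigma>" "\<sigma> \<le> S / 4" "(a + c) * \<sigma> = \<Delta> / 4"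
    using \<Delta> a c_pos lam_pos by (auto simp: \<sigma>_def \<Delta>_def field_simps)
  define \<rho> where "\<rho> = 1 / (2 * S)"
  define q where "q = x + \<rho> *\<^sub>R \<nu>"
  have \<rho>: "0 < \<rho>" using S by (simp add: \<rho>_def)
  have ball: "\<rho> \<le> norm (y - q)" if "G y \<le> 1" for y
    using radius_le_norm_diff_of_inner_le[OF \<nu> S hS[OF that]] by (simp add: \<rho>_def q_def algebra_simps)
  obtain \<kappa> where "0 < \<kappa>" and normal: "\<And>w. w \<in> frontier Z \<Longrightarrow> (norm (w - q))\<^sup>2 < \<rho>\<^sup>2 + \<kappa> \<Longrightarrow>
      norm (sgn (gradG w) + (1 / \<rho>) *\<^sub>R (w - q)) \<le> \<sigma> * D0"
    using sgn_gradG_near_sphere[OF \<rho> ball, of "\<sigma> * D0"] \<sigma> \<open>0 < D0\<close> by auto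
  define \<epsilon> where "\<epsilon> = min (min \<sigma> m) (S ^ 3 * \<kappa> / 4)"
  have "\<epsilon> \<le> m" by (simp add: \<epsilon>_def)
  then have \<epsilon>: "0 < \<epsilon>" "\<epsilon> \<le> \<sigma>" "2 * \<epsilon> \<le> S - L" "\<epsilon> \<le> S ^ 3 * \<kappa> / 4"
    using \<sigma> S \<open>0 < \<kappa>\<close> m by (auto simp: \<epsilon>_def)
  obtain w where w: "w \<in> frontier Z" and "D0 \<le> norm (w - x)"
    and lower: "(S - \<epsilon>) * (norm (w - x))\<^sup>2 < inner \<nu> (w - x)"
    using far[OF \<epsilon>(1,3)] by blast
  define D where "D = norm (w - x)"
  define t where "t = inner \<nu> (w - x)"
  have D: "0 < D" "D0 \<le> D" using \<open>0 < D0\<close> \<open>D0 \<le> norm (w - x)\<close> by (auto simp: D_def)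
  have Gw: "G w = 1" using G_frontier[OF w] .
  have t_lower: "(S - \<epsilon>) * D\<^sup>2 < t" using lower by (simp add: D_def t_def)
  have "(norm (w - q))\<^sup>2 < \<rho>\<^sup>2 + 4 * \<epsilon> / S ^ 3"
    using power2_norm_diff_radius_less[OF \<nu> S _ _ lower] \<epsilon> \<sigma> by (simp add: q_def \<rho>_def algebra_simps)
  also have "4 * \<epsilon> / S ^ 3 \<le> \<kappa>" using \<epsilon> S by (simp add: field_simps)
  finally have "norm (sgn (gradG w) + (2 * S) *\<^sub>R (w - x - (1 / (2 * S)) *\<^sub>R \<nu>)) \<le> \<sigma> * D0"
    using normal[OF w] by (simp add: \<rho>_def q_def diff_diff_eq)
  then have "S * D\<^sup>2 - \<sigma> * D0 * D \<le> inner (sgn (gradG w)) (x - w)"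
    using inner_ge_of_near_sphere_normal[OF \<nu> S hS[OF Gw[THEN eq_refl]]] by (simp add: D_def)
  moreover have "\<sigma> * D0 * D \<le> \<sigma> * D\<^sup>2" using \<sigma> D by (simp add: power2_eq_square mult_right_mono)
  ultimately have contact: "(S - \<sigma>) * D\<^sup>2 \<le> inner (sgn (gradG w)) (x - w)"
    by (simp add: algebra_simps)
  define b where "b = norm (gradG w)"
  have b: "c \<le> b" using norm_gradG_frontier[OF w] by (simp add: b_def)
  have "a * t + b * inner (sgn (gradG w)) (x - w) \<le> lam * D\<^sup>2"
    using gradG_semimonotone_sgn[OF x, of w] Gw by (simp add: a_def b_def \<nu>_def t_def D_def)
  moreover have "c * ((S - \<sigma>) * D\<^sup>2) \<le> b * ((S - \<sigma>) * D\<^sup>2)"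
    using b \<sigma> by (intro mult_right_mono) auto
  moreover have "\<dots> \<le> b * inner (sgn (gradG w)) (x - w)"
    using contact b c_pos by (intro mult_left_mono) auto
  moreover have "a * ((S - \<epsilon>) * D\<^sup>2) < a * t" using t_lower a by simp
  ultimately have "(a * (S - \<epsilon>) + c * (S - \<sigma>)) * D\<^sup>2 < lam * D\<^sup>2"
    by (simp add: algebra_simps)
  then have "a * (S - \<epsilon>) + c * (S - \<sigma>) < lam" using D by simp
  moreover have "a * \<epsilon> \<le> a * \<sigma>" using a \<epsilon> by (intro mult_left_mono) auto
  ultimately show False
    using \<sigma> mult_pos_pos[OF \<sigma>(1) a(2)] mult_pos_pos[OF \<sigma>(1) c_pos] by (simp add: \<Delta>_def algebra_simps)
qed

corollary inner_sgn_gradG_le: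
  assumes x: "x \<in> frontier Z" and z: "G z \<le> 1"
  shows "inner (sgn (gradG x)) (z - x) \<le> lam / (norm (gradG x) + c) * (norm (z - x))\<^sup>2"
proof (cases "z = x")
  case False
  then show ?thesis
    using inner_le_normal_quotient_sup[OF x z] normal_quotient_sup_le[OF x z False]
    by (smt (verit) mult_right_mono zero_le_power2)
qed simp

end

theorem lemma1p5:
  fixes G :: "'a::{real_inner, complete_space} \<Rightarrow> real"
    and gradG :: "'a \<Rightarrow> 'a"
    and mu :: "real \<Rightarrow> real"
    and lam c :: real
  assumes G_nonneg: "\<And>x. G x \<ge> 0"
    and grad: "\<And>x. is_gradient G x (gradG x)"
    and lam_pos: "lam > 0" and c_pos: "c > 0"
    and mu_cont: "continuous_on {0..} mu"
    and mu_mono: "mono_on {0..} mu"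
    and mu_nonneg: "\<And>s. s \<ge> 0 \<Longrightarrow> mu s \<ge> 0"
    and mu_0: "mu 0 = 0"
    and mu_inf: "filterlim mu at_top at_top"
    and i: "\<And>x. G x = 1 \<Longrightarrow> norm (gradG x) \<ge> c"
    and ii: "\<And>x y. x \<in> {z. G z \<le> 1} \<Longrightarrow> y \<in> {z. G z \<le> 1} \<Longrightarrow>
               norm (gradG x - gradG y) \<le> mu (norm (x - y))"
    and iii: "\<And>x z. x \<in> frontier {z. G z \<le> 1} \<Longrightarrow> z \<in> {z. G z \<le> 1} \<Longrightarrow>
               inner (gradG x - gradG z) (x - z) \<ge> - lam * (norm (x - z))\<^sup>2"
  shows "\<forall>x \<in> frontier {z. G z \<le> 1}. \<forall>z \<in> {z. G z \<le> 1}.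
           inner (gradG x) (x - z) + norm (gradG x) / (2 * (c / lam)) * (norm (x - z))\<^sup>2 \<ge> 0"
proof (intro ballI)
  interpret regular_sublevel G gradG mu lam c
    using grad lam_pos c_pos mu_cont mu_mono mu_0 i ii iii by unfold_locales auto
  fix x z assume x: "x \<in> frontier {z. G z \<le> 1}" and z: "z \<in> {z. G z \<le> 1}"
  define a where "a = norm (gradG x)"
  have "c \<le> a" using norm_gradG_frontier[OF x] by (simp add: a_def)
  have "inner (gradG x) (z - x) = a * inner (sgn (gradG x)) (z - x)"
    using eq_norm_scaleR_sgn[of "gradG x"] by (metis a_def inner_scaleR_left)
  also have "\<dots> \<le> a * (lam / (a + c) * (norm (z - x))\<^sup>2)"
    using inner_sgn_gradG_le[OF x] z by (intro mult_left_mono) (auto simp: a_def)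
  also have "\<dots> \<le> a * (lam / (2 * c) * (norm (z - x))\<^sup>2)"
    using \<open>c \<le> a\<close> c_pos lam_pos by (intro mult_left_mono mult_right_mono divide_left_mono) auto
  also have "\<dots> = a / (2 * (c / lam)) * (norm (x - z))\<^sup>2"
    using lam_pos by (simp add: norm_minus_commute)
  finally show "0 \<le> inner (gradG x) (x - z) + norm (gradG x) / (2 * (c / lam)) * (norm (x - z))\<^sup>2"
    by (simp add: a_def inner_diff_right)
qed

end
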